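(* Let $0\ne f\in F(\mathfrak B)$ belong to an irreducible $GL$-submodule isomorphic to $W(\lambda_1,\lambda_2)$. Then for every partition $\mu=(\mu_1,\mu_2)$ with $\mu_2\ge\lambda_1$ and every admissible $j$ (i.e. $0\le j\le\mu_1-\mu_2$), the identity $w^{(j)}_\mu=0$ is a consequence of $f=0$, i.e. $w^{(j)}_\mu$ lies in the T-ideal of $F(\mathfrak B)$ generated by $f$. In particular $(y_1z_2-y_2z_1)^{\lambda_1}$ lies in this T-ideal.
   Context: $K$ is a field of characteristic $0$. $\mathfrak B$ is the variety of bicommutative algebras (identities $(x_1x_2)x_3=(x_1x_3)x_2$, $x_1(x_2x_3)=x_2(x_1x_3)$), with free algebra $F(\mathfrak B)$ on $x_1,x_2,\dots$; a T-ideal is a two-sided ideal closed under all algebra endomorphisms. The general linear groups act on $F_d(\mathfrak B)$ by extending the natural linear action on $\mathrm{span}(x_1,\dots,x_d)$ to automorphisms; $W(\lambda)$ is the irreducible polynomial module indexed by the partition $\lambda$. Model: with $K[Y,Z]$ the commutative polynomial ring in $y_1,y_2,\dots,z_1,z_2,\dots$, the algebra $G$ has basis $\{x_i\}\cup\{Y^\alpha Z^\beta:|\alpha|,|\beta|>0\}$ and multiplication $x_ix_j=y_iz_j$, $x_i\cdot(Y^\alpha Z^\beta)=y_iY^\alpha Z^\beta$, $(Y^\alpha Z^\beta)\cdot x_j=Y^\alpha Z^\beta z_j$, $(Y^\alpha Z^\beta)(Y^\gamma Z^\delta)=Y^{\alpha+\gamma}Z^{\beta+\delta}$; it is known that $x_i\mapsto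 x_i$ gives an isomorphism $F(\mathfrak B)\cong G$, so elements of $F(\mathfrak B)^2$ are written as polynomials in the $y_i,z_i$ (positive degree in both sets). For $\mu=(\mu_1,\mu_2)$ with $\mu_2>0$, $w^{(j)}_\mu=y_1^j(y_1z_2-y_2z_1)^{\mu_2}z_1^{\mu_1-\mu_2-j}$, $0\le j\le\mu_1-\mu_2$. *)

theory Defs
  imports "HOL-Library.Poly_Mapping"
begin

datatype var = Yv nat | Zv nat

type_synonym 'k pol = "(var \<Rightarrow>\<^sub>0 nat) \<Rightarrow>\<^sub>0 'k"

text \<open>An element of G: a linear part sum_i c_i x_i (finitely supported coefficients)
  together with a polynomial part in K[Y,Z].  The carrier below requires the
  polynomial part to involve only monomials of positive degree in the y's and in the z's.\<close>
type_synonym 'k bic = "(nat \<Rightarrow>\<^sub>0 'k) \<times> 'k pol"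

definition pvar :: "var \<Rightarrow> 'k::comm_ring_1 pol" where
  "pvar v = Poly_Mapping.single (Poly_Mapping.single v 1) 1"

definition pconst :: "'k::comm_ring_1 \<Rightarrow> 'k pol" where
  "pconst c = Poly_Mapping.single 0 c"

abbreviation yy :: "nat \<Rightarrow> 'k::comm_ring_1 pol" where "yy i \<equiv> pvar (Yv i)"
abbreviation zz :: "nat \<Rightarrow> 'k::comm_ring_1 pol" where "zz i \<equiv> pvar (Zv i)"

definition ydeg :: "(var \<Rightarrow>\<^sub>0 nat) \<Rightarrow> nat" where
  "ydeg m = (\<Sum>v\<in>Poly_Mapping.keys m. case v of Yv _ \<Rightarrow> Poly_Mapping.lookup m v | Zv _ \<Rightarrow> 0)"

definition zdeg :: "(var \<Rightarrow>\<^sub>0 nat) \<Rightarrow> nat" where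
  "zdeg m = (\<Sum>v\<in>Poly_Mapping.keys m. case v of Yv _ \<Rightarrow> 0 | Zv _ \<Rightarrow> Poly_Mapping.lookup m v)"

definition bic_carrier :: "'k::comm_ring_1 bic set" where
  "bic_carrier = {a. \<forall>m\<in>Poly_Mapping.keys (snd a). 0 < ydeg m \<and> 0 < zdeg m}"

definition bic_zero :: "'k::comm_ring_1 bic" where
  "bic_zero = (0, 0)"

definition bic_add :: "'k::comm_ring_1 bic \<Rightarrow> 'k bic \<Rightarrow> 'k bic" where
  "bic_add a b = (fst a + fst b, snd a + snd b)"

definition bic_smul :: "'k::comm_ring_1 \<Rightarrow> 'k bic \<Rightarrow> 'k bic" where
  "bic_smul c a = (Poly_Mapping.map (\<lambda>x. c * x) (fst a), pconst c * snd a)"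

definition linY :: "(nat \<Rightarrow>\<^sub>0 'k::comm_ring_1) \<Rightarrow> 'k pol" where
  "linY l = (\<Sum>i\<in>Poly_Mapping.keys l. pconst (Poly_Mapping.lookup l i) * yy i)"

definition linZ :: "(nat \<Rightarrow>\<^sub>0 'k::comm_ring_1) \<Rightarrow> 'k pol" where
  "linZ l = (\<Sum>i\<in>Poly_Mapping.keys l. pconst (Poly_Mapping.lookup l i) * zz i)"

text \<open>The multiplication of G: x_i x_j = y_i z_j, x_i P = y_i P, P x_j = P z_j,
  P Q = P Q; extended bilinearly this is exactly (linY l1 + p1) * (linZ l2 + p2).\<close>
definition bic_mul :: "'k::comm_ring_1 bic \<Rightarrow> 'k bic \<Rightarrow> 'k bic" where
  "bic_mul a b = (0, (linY (fst a) + snd a) * (linZ (fst b) + snd b))"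

definition bic_x :: "nat \<Rightarrow> 'k::comm_ring_1 bic" where
  "bic_x i = (Poly_Mapping.single i 1, 0)"

definition xcomb :: "(nat \<Rightarrow> 'k::comm_ring_1) \<Rightarrow> nat set \<Rightarrow> 'k bic" where
  "xcomb c A = ((\<Sum>i\<in>A. Poly_Mapping.single i (c i)), 0)"

definition is_subspace :: "'k::comm_ring_1 bic set \<Rightarrow> bool" where
  "is_subspace S \<longleftrightarrow> S \<subseteq> bic_carrier \<and> bic_zero \<in> S \<and>
     (\<forall>a\<in>S. \<forall>b\<in>S. bic_add a b \<in> S) \<and> (\<forall>c. \<forall>a\<in>S. bic_smul c a \<in> S)"

definition is_endo :: "('k::comm_ring_1 bic \<Rightarrow> 'k bic) \<Rightarrow> bool" where
  "is_endo h \<longleftrightarrow> (\<forall>a\<in>bic_carrier. h a \<in> bic_carrier) \<and>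
     (\<forall>a\<in>bic_carrier. \<forall>b\<in>bic_carrier.
        h (bic_add a b) = bic_add (h a) (h b) \<and> h (bic_mul a b) = bic_mul (h a) (h b)) \<and>
     (\<forall>c. \<forall>a\<in>bic_carrier. h (bic_smul c a) = bic_smul c (h a))"

definition is_T_ideal :: "'k::comm_ring_1 bic set \<Rightarrow> bool" where
  "is_T_ideal I \<longleftrightarrow> is_subspace I \<and>
     (\<forall>a\<in>bic_carrier. \<forall>b\<in>I. bic_mul a b \<in> I \<and> bic_mul b a \<in> I) \<and>
     (\<forall>h. is_endo h \<longrightarrow> h ` I \<subseteq> I)"

definition T_ideal_gen :: "'k::comm_ring_1 bic \<Rightarrow> 'k bic set" where
  "T_ideal_gen f = \<Inter>{I. is_T_ideal I \<and> f \<in> I}"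

definition Fd :: "nat \<Rightarrow> 'k::comm_ring_1 bic set" where
  "Fd d = \<Inter>{S. is_subspace S \<and> (\<forall>a\<in>S. \<forall>b\<in>S. bic_mul a b \<in> S) \<and>
                 (\<forall>i\<in>{1..d}. bic_x i \<in> S)}"

text \<open>Matrices are g :: nat => nat => 'k, with indices in {1..d}.\<close>
definition invertible_mat :: "nat \<Rightarrow> (nat \<Rightarrow> nat \<Rightarrow> 'k::comm_ring_1) \<Rightarrow> bool" where
  "invertible_mat d g \<longleftrightarrow> (\<exists>h. \<forall>i\<in>{1..d}. \<forall>j\<in>{1..d}.
      (\<Sum>k\<in>{1..d}. g i k * h k j) = (if i = j then 1 else 0) \<and>
      (\<Sum>k\<in>{1..d}. h i k * g k j) = (if i = j then 1 else 0))"

text \<open>h is (an endomorphism extending) the action of g: x_j |-> sum_i g_ij x_i.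
  On F_d such an h is uniquely determined by g.\<close>
definition gl_acts :: "nat \<Rightarrow> (nat \<Rightarrow> nat \<Rightarrow> 'k::comm_ring_1) \<Rightarrow> ('k bic \<Rightarrow> 'k bic) \<Rightarrow> bool" where
  "gl_acts d g h \<longleftrightarrow> is_endo h \<and> (\<forall>j\<in>{1..d}. h (bic_x j) = xcomb (\<lambda>i. g i j) {1..d})"

definition is_GL_submodule :: "nat \<Rightarrow> 'k::comm_ring_1 bic set \<Rightarrow> bool" where
  "is_GL_submodule d M \<longleftrightarrow> is_subspace M \<and> M \<subseteq> Fd d \<and>
     (\<forall>g h. invertible_mat d g \<and> gl_acts d g h \<longrightarrow> h ` M \<subseteq> M)"

definition irreducible_GL :: "nat \<Rightarrow> 'k::comm_ring_1 bic set \<Rightarrow> bool" where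
  "irreducible_GL d M \<longleftrightarrow> is_GL_submodule d M \<and> M \<noteq> {bic_zero} \<and>
     (\<forall>N. is_GL_submodule d N \<and> N \<subseteq> M \<longrightarrow> N = {bic_zero} \<or> N = M)"

definition hw_vector :: "nat \<Rightarrow> (nat \<Rightarrow> nat) \<Rightarrow> 'k::comm_ring_1 bic \<Rightarrow> bool" where
  "hw_vector d wt v \<longleftrightarrow> v \<noteq> bic_zero \<and>
     (\<forall>t h. (\<forall>i\<in>{1..d}. t i \<noteq> 0) \<and> gl_acts d (\<lambda>i j. if i = j then t i else 0) h
        \<longrightarrow> h v = bic_smul (\<Prod>i\<in>{1..d}. t i ^ wt i) v) \<and>
     (\<forall>u h. (\<forall>i\<in>{1..d}. u i i = 1) \<and> (\<forall>i\<in>{1..d}. \<forall>j\<in>{1..d}. j < i \<longrightarrow> u i j = 0)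
        \<and> gl_acts d u h \<longrightarrow> h v = v)"

definition wt2 :: "nat \<Rightarrow> nat \<Rightarrow> nat \<Rightarrow> nat" where
  "wt2 a b = (\<lambda>i. if i = 1 then a else if i = 2 then b else 0)"

definition iso_W :: "nat \<Rightarrow> 'k::comm_ring_1 bic set \<Rightarrow> nat \<Rightarrow> nat \<Rightarrow> bool" where
  "iso_W d M l1 l2 \<longleftrightarrow> irreducible_GL d M \<and> (\<exists>v\<in>M. hw_vector d (wt2 l1 l2) v)"

definition wmu :: "nat \<Rightarrow> nat \<Rightarrow> nat \<Rightarrow> 'k::comm_ring_1 bic" where
  "wmu m1 m2 j = (0, yy 1 ^ j * (yy 1 * zz 2 - yy 2 * zz 1) ^ m2 * zz 1 ^ (m1 - m2 - j))"

end

theory Submission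
  imports Defs
begin

text \<open>
  Let \<open>v\<close> be a highest weight vector of the irreducible module containing \<open>f\<close>.
  Irreducibility puts \<open>v\<close> into every T-ideal containing \<open>f\<close>.  The torus forces
  \<open>v\<close> to be a polynomial in \<open>y\<^sub>1, z\<^sub>1, y\<^sub>2, z\<^sub>2\<close> of degree \<open>\<lambda>\<^sub>1\<close> in the variables of index 1
  and \<open>\<lambda>\<^sub>2\<close> in those of index 2 (or \<open>v\<close> is linear, \<open>\<lambda> = (1,0)\<close>, and \<open>x\<^sub>1x\<^sub>2 - x\<^sub>2x\<^sub>1\<close> does
  the job), and invariance
  under the shear \<open>x\<^sub>2 \<mapsto> x\<^sub>2 + s x\<^sub>1\<close> forces \<open>v = (y\<^sub>1z\<^sub>2 - y\<^sub>2z\<^sub>1)\<^bsup>\<lambda>\<^sub>2\<^esup> p(y\<^sub>1, z\<^sub>1)\<close>.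
  The T-ideal is closed under the substitutions \<open>x\<^sub>1 \<mapsto> s\<^sub>1x\<^sub>1 + s\<^sub>2x\<^sub>2\<close>; by a Vandermonde
  argument (characteristic 0) the scalars \<open>s\<^sub>1, s\<^sub>2\<close> may be replaced by polynomials, and
  the choice \<open>s\<^sub>1 = c\<^sub>1z\<^sub>2 - c\<^sub>2y\<^sub>2\<close>, \<open>s\<^sub>2 = c\<^sub>2y\<^sub>1 - c\<^sub>1z\<^sub>1\<close> with \<open>p(c\<^sub>1, c\<^sub>2) \<noteq> 0\<close> turns
  \<open>p(y\<^sub>1, z\<^sub>1)\<close> into \<open>p(c\<^sub>1, c\<^sub>2) (y\<^sub>1z\<^sub>2 - y\<^sub>2z\<^sub>1)\<^bsup>\<lambda>\<^sub>1-\<lambda>\<^sub>2\<^esup>\<close>.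
\<close>

section \<open>Substitution in polynomials\<close>

abbreviation lookup :: "('a \<Rightarrow>\<^sub>0 'b::zero) \<Rightarrow> 'a \<Rightarrow> 'b" where "lookup \<equiv> Poly_Mapping.lookup"
abbreviation keys :: "('a \<Rightarrow>\<^sub>0 'b::zero) \<Rightarrow> 'a set" where "keys \<equiv> Poly_Mapping.keys"
abbreviation single :: "'a \<Rightarrow> 'b::zero \<Rightarrow> 'a \<Rightarrow>\<^sub>0 'b" where "single \<equiv> Poly_Mapping.single"

definition eval_monom :: "(var \<Rightarrow> 'k::comm_ring_1 pol) \<Rightarrow> (var \<Rightarrow>\<^sub>0 nat) \<Rightarrow> 'k pol" where
  "eval_monom \<sigma> m = (\<Prod>v\<in>keys m. \<sigma> v ^ lookup m v)"

definition psubst :: "(var \<Rightarrow> 'k::comm_ring_1 pol) \<Rightarrow> 'k pol \<Rightarrow> 'k pol" where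
  "psubst \<sigma> p = (\<Sum>m\<in>keys p. pconst (lookup p m) * eval_monom \<sigma> m)"

lemma pconst_0[simp]: "pconst 0 = 0" by (simp add: pconst_def)
lemma pconst_1[simp]: "pconst 1 = 1" by (simp add: pconst_def)
lemma pconst_add: "pconst (a + b) = pconst a + pconst b" by (simp add: pconst_def single_add)
lemma pconst_mult: "pconst (a * b) = pconst a * pconst b" by (simp add: pconst_def mult_single)
lemma pconst_diff: "pconst (a - b) = pconst a - pconst b" by (simp add: pconst_def single_diff)
lemma pconst_power: "pconst (a ^ n) = pconst a ^ n"
  by (induction n) (simp_all add: pconst_mult)
lemma pconst_prod: "pconst (prod f S) = (\<Prod>x\<in>S. pconst (f x))"
  by (induction S rule: infinite_finite_induct) (simp_all add: pconst_mult)
lemma pconst_sum: "pconst (sum f S) = (\<Sum>x\<in>S. pconst (f x))"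
  by (induction S rule: infinite_finite_induct) (simp_all add: pconst_add)
lemma pconst_single: "pconst c * single m d = single m (c * d)"
  by (simp add: pconst_def mult_single)
lemma pconst_inj: "pconst a = pconst b \<longleftrightarrow> a = b"
  by (metis pconst_def lookup_single_eq)
lemma lookup_pconst_mult: "lookup (pconst c * p) m = c * lookup p m"
proof -
  have "pconst c * p = Poly_Mapping.map ((*) c) p"
    by (simp add: pconst_def mult_map_scale_conv_mult)
  then show ?thesis by (simp add: Poly_Mapping.map.rep_eq when_def)
qed
lemma keys_pconst_mult: "keys (pconst c * p) \<subseteq> keys p"
  by (auto simp: in_keys_iff lookup_pconst_mult)

lemma eval_monom_superset:
  assumes "finite S" "keys m \<subseteq> S"
  shows "eval_monom \<sigma> m = (\<Prod>v\<in>S. \<sigma> v ^ lookup m v)"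
  unfolding eval_monom_def
  by (rule prod.mono_neutral_left) (use assms in \<open>auto simp: in_keys_iff\<close>)

lemma eval_monom_zero[simp]: "eval_monom \<sigma> 0 = 1" by (simp add: eval_monom_def)

lemma eval_monom_add: "eval_monom \<sigma> (m + n) = eval_monom \<sigma> m * eval_monom \<sigma> n"
proof -
  let ?S = "keys m \<union> keys n"
  have "keys (m + n) \<subseteq> ?S" by (rule keys_add)
  then have "eval_monom \<sigma> (m + n) = (\<Prod>v\<in>?S. \<sigma> v ^ lookup (m+n) v)"
    by (intro eval_monom_superset) auto
  also have "\<dots> = (\<Prod>v\<in>?S. \<sigma> v ^ lookup m v * \<sigma> v ^ lookup n v)"
    by (simp add: lookup_add power_add)
  also have "\<dots> = eval_monom \<sigma> m * eval_monom \<sigma> n"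
    by (simp add: prod.distrib eval_monom_superset[of ?S])
  finally show ?thesis .
qed

lemma eval_monom_single: "eval_monom \<sigma> (single v k) = \<sigma> v ^ k"
  by (cases "k = 0") (simp_all add: eval_monom_def)

lemma psubst_superset:
  assumes "finite S" "keys p \<subseteq> S"
  shows "psubst \<sigma> p = (\<Sum>m\<in>S. pconst (lookup p m) * eval_monom \<sigma> m)"
  unfolding psubst_def
  by (rule sum.mono_neutral_left) (use assms in \<open>auto simp: in_keys_iff\<close>)

lemma psubst_zero[simp]: "psubst \<sigma> 0 = 0" by (simp add: psubst_def)

lemma psubst_add: "psubst \<sigma> (p + q) = psubst \<sigma> p + psubst \<sigma> q"
proof -
  let ?S = "keys p \<union> keys q"
  have "psubst \<sigma> (p + q) = (\<Sum>m\<in>?S. pconst (lookup (p+q) m) * eval_monom \<sigma> m)"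
    by (intro psubst_superset) (use keys_add[of p q] in auto)
  also have "\<dots> = (\<Sum>m\<in>?S. pconst (lookup p m) * eval_monom \<sigma> m + pconst (lookup q m) * eval_monom \<sigma> m)"
    by (simp add: lookup_add pconst_add distrib_right)
  also have "\<dots> = psubst \<sigma> p + psubst \<sigma> q"
    by (simp add: sum.distrib psubst_superset[of ?S])
  finally show ?thesis .
qed

lemma psubst_single: "psubst \<sigma> (single m c) = pconst c * eval_monom \<sigma> m"
  by (cases "c = 0") (simp_all add: psubst_def)

lemma psubst_sum: "psubst \<sigma> (sum f S) = (\<Sum>x\<in>S. psubst \<sigma> (f x))"
  by (induction S rule: infinite_finite_induct) (simp_all add: psubst_add)

lemma sum_single_lookup: "(p :: 'a \<Rightarrow>\<^sub>0 'b::comm_monoid_add) = (\<Sum>m\<in>keys p. single m (lookup p m))"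
proof (rule poly_mapping_eqI)
  fix k
  show "lookup p k = lookup (\<Sum>m\<in>keys p. single m (lookup p m)) k"
    by (cases "k \<in> keys p") (auto simp: lookup_sum lookup_single when_def in_keys_iff)
qed

lemma psubst_mult: "psubst \<sigma> (p * q) = psubst \<sigma> p * psubst \<sigma> q"
proof -
  have "p * q = (\<Sum>m\<in>keys p. single m (lookup p m)) * (\<Sum>n\<in>keys q. single n (lookup q n))"
    using sum_single_lookup[of p] sum_single_lookup[of q] by simp
  also have "\<dots> = (\<Sum>m\<in>keys p. \<Sum>n\<in>keys q. single (m + n) (lookup p m * lookup q n))"
    by (simp add: sum_product mult_single)
  finally have "psubst \<sigma> (p * q) = (\<Sum>m\<in>keys p. \<Sum>n\<in>keys q. pconst (lookup p m * lookup q n) * eval_monom \<sigma> (m+n))"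
    by (simp add: psubst_sum psubst_single)
  also have "\<dots> = (\<Sum>m\<in>keys p. \<Sum>n\<in>keys q. (pconst (lookup p m) * eval_monom \<sigma> m) * (pconst (lookup q n) * eval_monom \<sigma> n))"
    by (simp add: pconst_mult eval_monom_add mult_ac)
  also have "\<dots> = psubst \<sigma> p * psubst \<sigma> q"
    by (simp add: psubst_def sum_product)
  finally show ?thesis .
qed

lemma psubst_pconst[simp]: "psubst \<sigma> (pconst c) = pconst c"
  by (simp add: pconst_def psubst_single)

lemma psubst_one[simp]: "psubst \<sigma> 1 = 1"
  using psubst_pconst[of \<sigma> 1] by simp

lemma psubst_pvar[simp]: "psubst \<sigma> (pvar v) = \<sigma> v"
  by (simp add: pvar_def psubst_single eval_monom_single)

lemma psubst_uminus: "psubst \<sigma> (- p) = - psubst \<sigma> p"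
  using psubst_add[of \<sigma> p "-p"] by (metis add.right_inverse psubst_zero neg_eq_iff_add_eq_0)

lemma psubst_diff: "psubst \<sigma> (p - q) = psubst \<sigma> p - psubst \<sigma> q"
  using psubst_add[of \<sigma> p "-q"] by (simp add: psubst_uminus)

lemma psubst_power: "psubst \<sigma> (p ^ n) = psubst \<sigma> p ^ n"
  by (induction n) (simp_all add: psubst_mult)

lemma psubst_prod: "psubst \<sigma> (prod f S) = (\<Prod>x\<in>S. psubst \<sigma> (f x))"
  by (induction S rule: infinite_finite_induct) (simp_all add: psubst_mult)

lemmas psubst_simps = psubst_add psubst_mult psubst_uminus psubst_diff psubst_power psubst_pconst psubst_pvar psubst_one psubst_zero

lemma psubst_eval_monom: "psubst \<tau> (eval_monom \<sigma> m) = eval_monom (\<lambda>v. psubst \<tau> (\<sigma> v)) m"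
  by (simp add: eval_monom_def psubst_prod psubst_power)

lemma psubst_comp: "psubst \<tau> (psubst \<sigma> p) = psubst (\<lambda>v. psubst \<tau> (\<sigma> v)) p"
  unfolding psubst_def[of \<sigma> p] by (simp add: psubst_sum psubst_mult psubst_eval_monom psubst_def[of _ p])

definition vars :: "'k::zero pol \<Rightarrow> var set" where
  "vars p = (\<Union>m\<in>keys p. keys m)"

lemma psubst_cong:
  assumes "\<And>v. v \<in> vars p \<Longrightarrow> \<sigma> v = \<tau> v"
  shows "psubst \<sigma> p = psubst \<tau> p"
proof -
  have "eval_monom \<sigma> m = eval_monom \<tau> m" if "m \<in> keys p" for m
    unfolding eval_monom_def using that assms by (intro prod.cong refl) (metis UN_I vars_def)
  then show ?thesis unfolding psubst_def by simp
qed

lemma psubst_cong_vars: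
  assumes "vars P \<subseteq> U" "\<And>v. v \<in> U \<Longrightarrow> \<sigma> v = \<tau> v"
  shows "psubst \<sigma> P = psubst \<tau> P"
  using assms by (intro psubst_cong) auto

lemma vars_subset:
  assumes "\<forall>m\<in>keys P. \<forall>u\<in>keys m. u \<in> U" shows "vars P \<subseteq> U"
  using assms by (auto simp: vars_def)

lemma pvar_power: "pvar v ^ k = (single (single v k) 1 :: 'k::comm_ring_1 pol)"
  by (induction k) (simp_all add: pvar_def mult_single single_add[symmetric])

lemma prod_single_one: "finite S \<Longrightarrow> (\<Prod>v\<in>S. single (f v) (1::'k::comm_ring_1)) = single (\<Sum>v\<in>S. f v) 1"
  by (induction S rule: finite_induct) (simp_all add: mult_single)

lemma eval_monom_pvar: "eval_monom pvar m = (single m 1 :: 'k::comm_ring_1 pol)"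
proof -
  have "eval_monom pvar m = (\<Prod>v\<in>keys m. single (single v (lookup m v)) (1::'k))"
    by (simp add: eval_monom_def pvar_power)
  also have "\<dots> = single (\<Sum>v\<in>keys m. single v (lookup m v)) 1"
    by (simp add: prod_single_one)
  also have "\<dots> = single m 1" using sum_single_lookup[of m] by simp
  finally show ?thesis .
qed

lemma psubst_pvar_id[simp]: "psubst pvar p = p"
proof -
  have "psubst pvar p = (\<Sum>m\<in>keys p. single m (lookup p m))"
    by (simp add: psubst_def eval_monom_pvar pconst_single)
  then show ?thesis using sum_single_lookup[of p] by simp
qed

fun var_index :: "var \<Rightarrow> nat" where "var_index (Yv n) = n" | "var_index (Zv n) = n"

definition index_deg :: "nat \<Rightarrow> (var \<Rightarrow>\<^sub>0 nat) \<Rightarrow> nat" where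
  "index_deg i m = (\<Sum>v\<in>keys m. if var_index v = i then lookup m v else 0)"

lemma eval_monom_diag:
  "eval_monom (\<lambda>v. pconst (c v) * pvar v) m = pconst (\<Prod>v\<in>keys m. c v ^ lookup m v) * (single m 1 :: 'k::comm_ring_1 pol)"
proof -
  have "eval_monom (\<lambda>v. pconst (c v) * pvar v) m = (\<Prod>v\<in>keys m. pconst (c v ^ lookup m v) * pvar v ^ lookup m v)"
    by (simp add: eval_monom_def power_mult_distrib pconst_power)
  also have "\<dots> = pconst (\<Prod>v\<in>keys m. c v ^ lookup m v) * eval_monom pvar m"
    by (simp add: prod.distrib pconst_prod eval_monom_def)
  finally show ?thesis by (simp add: eval_monom_pvar)
qed

lemma lookup_psubst_diag:
  "lookup (psubst (\<lambda>v. pconst (c v) * pvar v) p) n = (\<Prod>v\<in>keys n. c v ^ lookup n v) * lookup (p :: 'k::comm_ring_1 pol) n"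
proof -
  have "psubst (\<lambda>v. pconst (c v) * pvar v) p = (\<Sum>m\<in>keys p. single m (lookup p m * (\<Prod>v\<in>keys m. c v ^ lookup m v)))"
    unfolding psubst_def eval_monom_diag by (simp add: mult.assoc[symmetric] pconst_mult[symmetric] pconst_single)
  then show ?thesis
    by (cases "n \<in> keys p") (auto simp: lookup_sum lookup_single when_def in_keys_iff mult.commute)
qed

lemma psubst_homogeneous:
  assumes "\<And>v. var_index v = i \<Longrightarrow> \<sigma> v = L * \<sigma>' v" "\<And>v. var_index v \<noteq> i \<Longrightarrow> \<sigma> v = \<sigma>' v"
    and "\<And>m. m \<in> keys p \<Longrightarrow> index_deg i m = n"
  shows "psubst \<sigma> p = L ^ n * psubst \<sigma>' p"
proof -
  have "eval_monom \<sigma> m = L ^ index_deg i m * eval_monom \<sigma>' m" for m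
  proof -
    have "eval_monom \<sigma> m = (\<Prod>v\<in>keys m. L ^ (if var_index v = i then lookup m v else 0) * \<sigma>' v ^ lookup m v)"
      unfolding eval_monom_def by (intro prod.cong refl) (simp add: assms power_mult_distrib)
    also have "\<dots> = L ^ index_deg i m * eval_monom \<sigma>' m"
      by (simp add: prod.distrib index_deg_def eval_monom_def power_sum)
    finally show ?thesis .
  qed
  then have "psubst \<sigma> p = (\<Sum>m\<in>keys p. L ^ n * (pconst (lookup p m) * eval_monom \<sigma>' m))"
    unfolding psubst_def using assms(3) by (intro sum.cong refl) (simp add: mult_ac)
  then show ?thesis by (simp add: psubst_def sum_distrib_left)
qed

lemma psubst_pconst_lookup:
  "psubst (\<lambda>v. pconst (\<kappa> v)) p = pconst (\<Sum>m\<in>keys p. lookup p m * (\<Prod>v\<in>keys m. \<kappa> v ^ lookup m v))"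
  by (simp add: psubst_def eval_monom_def pconst_sum pconst_mult pconst_prod pconst_power)

lemma lookup_single_mult: "lookup (single k c * p) (k + q) = c * lookup (p :: (var \<Rightarrow>\<^sub>0 nat) \<Rightarrow>\<^sub>0 'k::comm_ring_1) q"
proof -
  have "lookup (single k c * p) (k + q) = (\<Sum>l. (c when k = l) * (\<Sum>r. lookup p r when k + q = l + r))"
    by (simp add: lookup_mult lookup_single)
  also have "\<dots> = c * (\<Sum>r. lookup p r when k + q = k + r)"
    by (simp add: when_mult Sum_any_when_equal)
  also have "(\<Sum>r. lookup p r when k + q = k + r) = (\<Sum>r. lookup p r when r = q)"
    by (intro Sum_any.cong) (auto simp: when_def)
  finally show ?thesis by simp
qed

lemma keys_single_mult: "keys (single k c * (p :: (var \<Rightarrow>\<^sub>0 nat) \<Rightarrow>\<^sub>0 'k::comm_ring_1)) \<subseteq> {k + q | q. q \<in> keys p}"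
  using keys_mult[of "single k c" p] by (cases "c = 0") auto

text \<open>Polynomials over a field form a domain only when the variables are linearly ordered
  (the \<open>Poly_Mapping\<close> instance of \<open>ring_no_zero_divisors\<close>); any linear order will do.\<close>

fun var_code :: "var \<Rightarrow> nat" where "var_code (Yv n) = 2 * n" | "var_code (Zv n) = 2 * n + 1"
lemma var_code_inj: "var_code a = var_code b \<Longrightarrow> a = b"
  by (cases a; cases b; simp; presburger)

instantiation var :: linorder begin
definition less_eq_var :: "var \<Rightarrow> var \<Rightarrow> bool" where "less_eq_var a b \<longleftrightarrow> var_code a \<le> var_code b"
definition less_var :: "var \<Rightarrow> var \<Rightarrow> bool" where "less_var a b \<longleftrightarrow> var_code a < var_code b"
instance by standard (auto simp: less_eq_var_def less_var_def intro: var_code_inj)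
end

section \<open>Ideals of the polynomial ring and the Vandermonde argument\<close>

definition pol_ideal :: "'k::comm_ring_1 pol set \<Rightarrow> bool" where
  "pol_ideal V \<longleftrightarrow> 0 \<in> V \<and> (\<forall>x\<in>V. \<forall>y\<in>V. x + y \<in> V) \<and> (\<forall>X. \<forall>x\<in>V. X * x \<in> V)"

lemma pol_ideal_sum: "pol_ideal V \<Longrightarrow> (\<And>x. x \<in> S \<Longrightarrow> g x \<in> V) \<Longrightarrow> sum g S \<in> V"
  by (induction S rule: infinite_finite_induct) (auto simp: pol_ideal_def)

lemma pol_ideal_add: "pol_ideal V \<Longrightarrow> x \<in> V \<Longrightarrow> y \<in> V \<Longrightarrow> x + y \<in> V"
  by (auto simp: pol_ideal_def)

lemma pol_ideal_mult: "pol_ideal V \<Longrightarrow> x \<in> V \<Longrightarrow> X * x \<in> V"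
  by (auto simp: pol_ideal_def)

lemma pol_ideal_diff: "pol_ideal V \<Longrightarrow> x \<in> V \<Longrightarrow> y \<in> V \<Longrightarrow> x - y \<in> V"
  using pol_ideal_add[of V x "(-1) * y"] pol_ideal_mult[of V y "-1"] by simp

lemma eval_monom_upd: "eval_monom (pvar(w := A)) m = A ^ lookup m w * (single (Poly_Mapping.update w 0 m) 1 :: 'k::comm_ring_1 pol)"
proof (cases "w \<in> keys m")
  case True
  have ku: "keys (Poly_Mapping.update w 0 m) = keys m - {w}"
    by (simp add: keys_update)
  have "eval_monom (pvar(w := A)) m = A ^ lookup m w * (\<Prod>v\<in>keys m - {w}. pvar v ^ lookup m v)"
    unfolding eval_monom_def using True by (simp add: prod.remove)
  also have "(\<Prod>v\<in>keys m - {w}. pvar v ^ lookup m v) = eval_monom pvar (Poly_Mapping.update w 0 m)"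
    unfolding eval_monom_def ku by (intro prod.cong refl) (auto simp: lookup_update)
  finally show ?thesis by (simp only: eval_monom_pvar)
next
  case False
  then have "Poly_Mapping.update w 0 m = m"
    by (intro poly_mapping_eqI) (auto simp: lookup_update in_keys_iff)
  moreover have "eval_monom (pvar(w := A)) m = eval_monom pvar m"
    unfolding eval_monom_def using False by (intro prod.cong refl) auto
  ultimately show ?thesis using False by (simp add: eval_monom_pvar in_keys_iff)
qed

definition var_coeff :: "var \<Rightarrow> nat \<Rightarrow> 'k::comm_ring_1 pol \<Rightarrow> 'k pol" where
  "var_coeff w r p = (\<Sum>m\<in>{m\<in>keys p. lookup m w = r}. pconst (lookup p m) * single (Poly_Mapping.update w 0 m) 1)"

lemma psubst_upd_var_coeff:
  "psubst (pvar(w := A)) p = (\<Sum>r\<in>(\<lambda>m. lookup m w) ` keys p. A ^ r * var_coeff w r p)"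
proof -
  have "psubst (pvar(w := A)) p = (\<Sum>m\<in>keys p. A ^ lookup m w * (pconst (lookup p m) * single (Poly_Mapping.update w 0 m) 1))"
    unfolding psubst_def eval_monom_upd by (simp add: mult_ac)
  also have "\<dots> = (\<Sum>r\<in>(\<lambda>m. lookup m w) ` keys p. \<Sum>m\<in>{m\<in>keys p. lookup m w = r}. A ^ lookup m w * (pconst (lookup p m) * single (Poly_Mapping.update w 0 m) 1))"
    by (rule sum.group[symmetric]) auto
  also have "\<dots> = (\<Sum>r\<in>(\<lambda>m. lookup m w) ` keys p. A ^ r * var_coeff w r p)"
    unfolding var_coeff_def sum_distrib_left by (intro sum.cong refl) auto
  finally show ?thesis .
qed

lemma two_power_inj: "(2::'k::field_char_0) ^ x = 2 ^ y \<Longrightarrow> x = y"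
proof -
  assume "(2::'k) ^ x = 2 ^ y"
  then have "of_nat (2 ^ x) = (of_nat (2 ^ y) :: 'k)" by simp
  then have "(2::nat) ^ x = 2 ^ y" by (simp only: of_nat_eq_iff)
  then show "x = y" by simp
qed

lemma pol_ideal_vandermonde:
  fixes C :: "nat \<Rightarrow> 'k::field_char_0 pol"
  assumes V: "pol_ideal V" and "\<And>s. s \<noteq> 0 \<Longrightarrow> (\<Sum>r\<le>N. pconst (s ^ r) * C r) \<in> V" and "r \<le> N"
  shows "C r \<in> V"
  using assms(2,3)
proof (induction N arbitrary: C r)
  case 0
  then show ?case using "0.prems"(1)[of 1] by simp
next
  case (Suc N)
  define M where "M = Suc N"
  define f where "f s = (\<Sum>r\<le>M. pconst (s ^ r) * C r)" for s :: 'k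
  have fV: "s \<noteq> 0 \<Longrightarrow> f s \<in> V" for s using Suc.prems(1) by (simp add: f_def M_def)
  text \<open>\<open>f (2s) - 2\<^sup>M f s\<close> has no coefficient in degree \<open>M\<close>.\<close>
  define C' where "C' r = pconst (2 ^ r - 2 ^ M) * C r" for r
  have "(\<Sum>r\<le>N. pconst (s ^ r) * C' r) \<in> V" if "s \<noteq> 0" for s
  proof -
    have "f (2 * s) - pconst (2 ^ M) * f s = (\<Sum>r\<le>M. pconst ((2 * s) ^ r - 2 ^ M * s ^ r) * C r)"
      by (simp add: f_def sum_distrib_left sum_subtractf[symmetric] pconst_diff pconst_mult
          left_diff_distrib right_diff_distrib mult_ac)
    also have "\<dots> = (\<Sum>r\<le>N. pconst (s ^ r) * C' r)"
      by (simp add: M_def power_mult_distrib C'_def pconst_mult[symmetric] algebra_simps)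
    moreover have "f (2 * s) - pconst (2 ^ M) * f s \<in> V"
      using that by (intro pol_ideal_diff[OF V] fV pol_ideal_mult[OF V]) simp_all
    ultimately show ?thesis by simp
  qed
  then have C'V: "r \<le> N \<Longrightarrow> C' r \<in> V" for r using Suc.IH by blast
  have CV: "C r \<in> V" if r: "r \<le> N" for r
  proof -
    have "(2::'k) ^ r \<noteq> 2 ^ M" using r two_power_inj[of r M] by (auto simp: M_def)
    then have "C r = pconst (1 / (2 ^ r - 2 ^ M)) * C' r"
      by (simp add: C'_def mult.assoc[symmetric] pconst_mult[symmetric])
    then show ?thesis using pol_ideal_mult[OF V C'V[OF r]] by simp
  qed
  have "C M = f 1 - (\<Sum>r\<le>N. C r)"
    by (simp add: f_def M_def)
  moreover have "(\<Sum>r\<le>N. C r) \<in> V" by (rule pol_ideal_sum[OF V]) (simp add: CV)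
  ultimately have "C M \<in> V"
    using pol_ideal_diff[OF V fV[of 1]] by simp
  then show ?case using CV Suc.prems(2) by (cases "r \<le> N") (auto simp: M_def le_Suc_eq)
qed

lemma pol_ideal_psubst_var:
  fixes p :: "'k::field_char_0 pol"
  assumes V: "pol_ideal V" and H: "\<And>s. s \<noteq> 0 \<Longrightarrow> psubst (pvar(w := pconst s)) p \<in> V"
  shows "psubst (pvar(w := A)) p \<in> V"
proof -
  define R where "R = (\<lambda>m. lookup m w) ` keys p"
  have "finite R" by (simp add: R_def)
  then have N: "R \<subseteq> {..\<Sum>R}" by (auto intro: member_le_sum)
  define N where "N = \<Sum>R"
  note N = N[folded N_def]
  define C where "C r = (if r \<in> R then var_coeff w r p else 0)" for r
  have eq: "psubst (pvar(w := B)) p = (\<Sum>r\<le>N. B ^ r * C r)" for B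
    unfolding psubst_upd_var_coeff R_def[symmetric]
    by (rule sum.mono_neutral_cong_left) (use N in \<open>auto simp: C_def\<close>)
  have "C r \<in> V" if "r \<le> N" for r
    using pol_ideal_vandermonde[OF V _ that, of C] H eq by (simp add: pconst_power)
  then show ?thesis unfolding eq
    by (intro pol_ideal_sum[OF V] pol_ideal_mult[OF V]) auto
qed

lemma pol_ideal_zero_set: "pol_ideal {0 :: 'k::comm_ring_1 pol}"
  by (simp add: pol_ideal_def)

lemma pol_ideal_intro:
  fixes V :: "'k::comm_ring_1 pol set"
  assumes "0 \<in> V" "\<And>x y. x \<in> V \<Longrightarrow> y \<in> V \<Longrightarrow> x + y \<in> V"
    "\<And>c x. x \<in> V \<Longrightarrow> pconst c * x \<in> V" "\<And>v x. x \<in> V \<Longrightarrow> pvar v * x \<in> V"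
  shows "pol_ideal V"
proof -
  have pw: "pvar v ^ k * x \<in> V" if "x \<in> V" for v k x
    using that by (induction k) (simp_all add: mult.assoc assms(4))
  have pr: "finite S \<Longrightarrow> (\<Prod>v\<in>S. pvar v ^ f v) * x \<in> V" if "x \<in> V" for S f x
  proof (induction S rule: finite_induct)
    case empty then show ?case using that by simp
  next
    case (insert a S) then show ?case by (simp add: mult.assoc pw)
  qed
  have sm: "finite S \<Longrightarrow> (\<And>m. m \<in> S \<Longrightarrow> g m \<in> V) \<Longrightarrow> sum g S \<in> V" for S g
    by (induction S rule: finite_induct) (auto simp: assms(1,2))
  have "X * x \<in> V" if "x \<in> V" for X x
  proof -
    have "X * x = psubst pvar X * x" by simp
    also have "\<dots> = (\<Sum>m\<in>keys X. pconst (lookup X m) * eval_monom pvar m * x)"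
      unfolding psubst_def by (simp add: sum_distrib_right)
    also have "\<dots> = (\<Sum>m\<in>keys X. pconst (lookup X m) * (eval_monom pvar m * x))"
      by (simp add: mult.assoc)
    finally have "X * x = (\<Sum>m\<in>keys X. pconst (lookup X m) * (eval_monom pvar m * x))" .
    also have "\<dots> \<in> V"
      by (intro sm finite_keys assms(3)) (simp add: eval_monom_def pr that)
    finally show ?thesis .
  qed
  then show ?thesis using assms(1,2) by (simp add: pol_ideal_def)
qed

lemma pol_ideal_psubst_two_vars:
  fixes \<Phi> :: "'k::field_char_0 pol"
  assumes V: "pol_ideal V" and w: "w1 \<noteq> w2"
    and H: "\<And>s1 s2. s1 \<noteq> 0 \<Longrightarrow> s2 \<noteq> 0 \<Longrightarrow> psubst (pvar(w2 := pconst s2)) (psubst (pvar(w1 := pconst s1)) \<Phi>) \<in> V"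
    and B: "\<And>X. psubst (pvar(w1 := X)) B = B"
  shows "psubst (pvar(w1 := A)) (psubst (pvar(w2 := B)) \<Phi>) \<in> V"
proof -
  have step1: "psubst (pvar(w2 := B)) (psubst (pvar(w1 := pconst s1)) \<Phi>) \<in> V" if "s1 \<noteq> 0" for s1
    using pol_ideal_psubst_var[OF V, of w2 "psubst (pvar(w1 := pconst s1)) \<Phi>" B] H that by blast
  have comm: "psubst (pvar(w1 := pconst s1)) (psubst (pvar(w2 := B)) \<Phi>) = psubst (pvar(w2 := B)) (psubst (pvar(w1 := pconst s1)) \<Phi>)" for s1
  proof -
    have "(\<lambda>v. psubst (pvar(w1 := pconst s1)) ((pvar(w2 := B)) v)) = (\<lambda>v. psubst (pvar(w2 := B)) ((pvar(w1 := pconst s1)) v))"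
      using w B by (auto simp: fun_eq_iff)
    then show ?thesis by (simp add: psubst_comp)
  qed
  show ?thesis
    using pol_ideal_psubst_var[OF V, of w1 "psubst (pvar(w2 := B)) \<Phi>" A] step1 comm by simp
qed

abbreviation lin_scale :: "'k::comm_ring_1 \<Rightarrow> (nat \<Rightarrow>\<^sub>0 'k) \<Rightarrow> (nat \<Rightarrow>\<^sub>0 'k)" where
  "lin_scale c l \<equiv> Poly_Mapping.map (\<lambda>x. c * x) l"

lemma lookup_lin_scale[simp]: "lookup (lin_scale c l) i = c * lookup l i"
  by (simp add: Poly_Mapping.map.rep_eq when_def)

lemma lin_scale_zero[simp]: "lin_scale c 0 = 0"
  by (intro poly_mapping_eqI) simp

definition lin_ext :: "(nat \<Rightarrow> (nat \<Rightarrow>\<^sub>0 'k::comm_ring_1)) \<Rightarrow> (nat \<Rightarrow>\<^sub>0 'k) \<Rightarrow> (nat \<Rightarrow>\<^sub>0 'k)" where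
  "lin_ext E l = (\<Sum>j\<in>keys l. lin_scale (lookup l j) (E j))"

lemma lookup_lin_ext: "lookup (lin_ext E l) i = (\<Sum>j\<in>keys l. lookup l j * lookup (E j) i)"
  by (simp add: lin_ext_def lookup_sum)

lemma lookup_lin_ext_superset: "finite S \<Longrightarrow> keys l \<subseteq> S \<Longrightarrow> lookup (lin_ext E l) i = (\<Sum>j\<in>S. lookup l j * lookup (E j) i)"
  unfolding lookup_lin_ext by (rule sum.mono_neutral_left) (auto simp: in_keys_iff)

lemma lin_ext_add: "lin_ext E (l1 + l2) = lin_ext E l1 + lin_ext E l2"
proof (rule poly_mapping_eqI)
  fix i
  let ?S = "keys l1 \<union> keys l2"
  have "keys (l1 + l2) \<subseteq> ?S" by (rule keys_add)
  then show "lookup (lin_ext E (l1 + l2)) i = lookup (lin_ext E l1 + lin_ext E l2) i"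
    by (simp add: lookup_lin_ext_superset[of ?S] lookup_add distrib_right sum.distrib)
qed

lemma lin_ext_lin_scale: "lin_ext E (lin_scale c l) = lin_scale c (lin_ext E l)"
proof (rule poly_mapping_eqI)
  fix i
  have "keys (lin_scale c l) \<subseteq> keys l" by (auto simp: in_keys_iff)
  then have "lookup (lin_ext E (lin_scale c l)) i = (\<Sum>j\<in>keys l. lookup (lin_scale c l) j * lookup (E j) i)"
    by (intro lookup_lin_ext_superset) auto
  then show "lookup (lin_ext E (lin_scale c l)) i = lookup (lin_scale c (lin_ext E l)) i"
    by (simp add: lookup_lin_ext sum_distrib_left mult.assoc)
qed

lemma lin_ext_zero[simp]: "lin_ext E 0 = 0" by (simp add: lin_ext_def)

lemma lin_ext_single_one: "lin_ext E (single j 1) = E j"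
  by (simp add: lin_ext_def Poly_Mapping.map.rep_eq poly_mapping_eqI when_def)

lemma linY_superset: "finite S \<Longrightarrow> keys l \<subseteq> S \<Longrightarrow> linY l = (\<Sum>i\<in>S. pconst (lookup l i) * yy i)"
  unfolding linY_def by (rule sum.mono_neutral_left) (auto simp: in_keys_iff)
lemma linZ_superset: "finite S \<Longrightarrow> keys l \<subseteq> S \<Longrightarrow> linZ l = (\<Sum>i\<in>S. pconst (lookup l i) * zz i)"
  unfolding linZ_def by (rule sum.mono_neutral_left) (auto simp: in_keys_iff)

lemma linY_add: "linY (l1 + l2) = linY l1 + linY l2"
proof -
  let ?S = "keys l1 \<union> keys l2"
  have "keys (l1 + l2) \<subseteq> ?S" by (rule keys_add)
  then show ?thesis
    by (simp add: linY_superset[of ?S] lookup_add pconst_add distrib_right sum.distrib)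
qed
lemma linZ_add: "linZ (l1 + l2) = linZ l1 + linZ l2"
proof -
  let ?S = "keys l1 \<union> keys l2"
  have "keys (l1 + l2) \<subseteq> ?S" by (rule keys_add)
  then show ?thesis
    by (simp add: linZ_superset[of ?S] lookup_add pconst_add distrib_right sum.distrib)
qed

lemma linY_lin_scale: "linY (lin_scale c l) = pconst c * linY l"
proof -
  have "keys (lin_scale c l) \<subseteq> keys l" by (auto simp: in_keys_iff)
  then have "linY (lin_scale c l) = (\<Sum>i\<in>keys l. pconst (lookup (lin_scale c l) i) * yy i)"
    by (intro linY_superset) auto
  then show ?thesis
    by (simp add: linY_def sum_distrib_left pconst_mult mult.assoc)
qed
lemma linZ_lin_scale: "linZ (lin_scale c l) = pconst c * linZ l"
proof -
  have "keys (lin_scale c l) \<subseteq> keys l" by (auto simp: in_keys_iff)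
  then have "linZ (lin_scale c l) = (\<Sum>i\<in>keys l. pconst (lookup (lin_scale c l) i) * zz i)"
    by (intro linZ_superset) auto
  then show ?thesis
    by (simp add: linZ_def sum_distrib_left pconst_mult mult.assoc)
qed

lemma linY_zero[simp]: "linY 0 = 0" by (simp add: linY_def)
lemma linZ_zero[simp]: "linZ 0 = 0" by (simp add: linZ_def)

lemma linY_sum: "linY (sum f S) = (\<Sum>x\<in>S. linY (f x))"
  by (induction S rule: infinite_finite_induct) (simp_all add: linY_add)
lemma linZ_sum: "linZ (sum f S) = (\<Sum>x\<in>S. linZ (f x))"
  by (induction S rule: infinite_finite_induct) (simp_all add: linZ_add)

lemma linY_single: "linY (single i c) = pconst c * yy i"
  by (cases "c = 0") (simp_all add: linY_def)
lemma linZ_single: "linZ (single i c) = pconst c * zz i"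
  by (cases "c = 0") (simp_all add: linZ_def)

definition lin_subst :: "(nat \<Rightarrow> (nat \<Rightarrow>\<^sub>0 'k::comm_ring_1)) \<Rightarrow> var \<Rightarrow> 'k pol" where
  "lin_subst E v = (case v of Yv j \<Rightarrow> linY (E j) | Zv j \<Rightarrow> linZ (E j))"

lemma lin_subst_simps[simp]: "lin_subst E (Yv j) = linY (E j)" "lin_subst E (Zv j) = linZ (E j)"
  by (simp_all add: lin_subst_def)

lemma psubst_linY: "psubst \<sigma> (linY l) = (\<Sum>i\<in>keys l. pconst (lookup l i) * \<sigma> (Yv i))"
  by (simp add: linY_def psubst_sum psubst_mult pvar_def[symmetric])
lemma psubst_linZ: "psubst \<sigma> (linZ l) = (\<Sum>i\<in>keys l. pconst (lookup l i) * \<sigma> (Zv i))"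
  by (simp add: linZ_def psubst_sum psubst_mult pvar_def[symmetric])

lemma psubst_lin_subst_linY: "psubst (lin_subst E) (linY l) = linY (lin_ext E l)"
  by (simp add: psubst_linY lin_ext_def linY_sum linY_lin_scale)
lemma psubst_lin_subst_linZ: "psubst (lin_subst E) (linZ l) = linZ (lin_ext E l)"
  by (simp add: psubst_linZ lin_ext_def linZ_sum linZ_lin_scale)

definition lin_endo :: "(nat \<Rightarrow> (nat \<Rightarrow>\<^sub>0 'k::comm_ring_1)) \<Rightarrow> 'k bic \<Rightarrow> 'k bic" where
  "lin_endo E a = (lin_ext E (fst a), psubst (lin_subst E) (snd a))"

definition weighted_deg :: "(var \<Rightarrow> nat) \<Rightarrow> (var \<Rightarrow>\<^sub>0 nat) \<Rightarrow> nat" where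
  "weighted_deg w m = (\<Sum>v\<in>keys m. w v * lookup m v)"

definition weight_pos :: "(var \<Rightarrow> nat) \<Rightarrow> 'k::comm_ring_1 pol \<Rightarrow> bool" where
  "weight_pos w Q \<longleftrightarrow> (\<forall>m\<in>keys Q. 0 < weighted_deg w m)"

definition y_weight :: "var \<Rightarrow> nat" where "y_weight v = (case v of Yv _ \<Rightarrow> 1 | Zv _ \<Rightarrow> 0)"
definition z_weight :: "var \<Rightarrow> nat" where "z_weight v = (case v of Yv _ \<Rightarrow> 0 | Zv _ \<Rightarrow> 1)"

lemma ydeg_eq_weighted_deg: "ydeg m = weighted_deg y_weight m"
  unfolding ydeg_def weighted_deg_def y_weight_def by (intro sum.cong refl) (simp split: var.split)

lemma zdeg_eq_weighted_deg: "zdeg m = weighted_deg z_weight m"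
  unfolding zdeg_def weighted_deg_def z_weight_def by (intro sum.cong refl) (simp split: var.split)

lemma bic_carrier_iff: "a \<in> bic_carrier \<longleftrightarrow> weight_pos y_weight (snd a) \<and> weight_pos z_weight (snd a)"
  by (auto simp: bic_carrier_def weight_pos_def ydeg_eq_weighted_deg zdeg_eq_weighted_deg)

lemma weighted_deg_superset:
  "finite S \<Longrightarrow> keys m \<subseteq> S \<Longrightarrow> weighted_deg w m = (\<Sum>v\<in>S. w v * lookup m v)"
  unfolding weighted_deg_def by (rule sum.mono_neutral_left) (auto simp: in_keys_iff)

lemma weighted_deg_add: "weighted_deg w (m + n) = weighted_deg w m + weighted_deg w n"
proof -
  let ?S = "keys m \<union> keys n"
  have "keys (m + n) \<subseteq> ?S" by (rule keys_add)
  then show ?thesis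
    by (simp add: weighted_deg_superset[of ?S] lookup_add distrib_left sum.distrib)
qed

lemma weighted_deg_pos_obtain:
  assumes "0 < weighted_deg w m" obtains v where "v \<in> keys m" "0 < w v"
proof -
  have "(\<Sum>v\<in>keys m. w v * lookup m v) \<noteq> 0" using assms unfolding weighted_deg_def by (rule gr_implies_not0)
  then obtain v where "v \<in> keys m" "w v * lookup m v \<noteq> 0"
    by (rule sum.not_neutral_contains_not_neutral)
  then show ?thesis using that by simp
qed

lemma weight_pos_zero [simp]: "weight_pos w 0"
  by (simp add: weight_pos_def)

lemma weight_pos_add: "weight_pos w A \<Longrightarrow> weight_pos w B \<Longrightarrow> weight_pos w (A + B)"
  unfolding weight_pos_def using keys_add[of A B] by blast

lemma weight_pos_sum: "(\<And>x. x \<in> S \<Longrightarrow> weight_pos w (f x)) \<Longrightarrow> weight_pos w (sum f S)"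
  by (induction S rule: infinite_finite_induct) (simp_all add: weight_pos_add)

lemma weight_pos_mult_left: "weight_pos w A \<Longrightarrow> weight_pos w (A * B)"
  unfolding weight_pos_def using keys_mult[of A B] by (fastforce simp: weighted_deg_add)

lemma weight_pos_mult_right: "weight_pos w B \<Longrightarrow> weight_pos w (A * B)"
  using weight_pos_mult_left[of w B A] by (simp add: mult.commute)

lemma weight_pos_pvar:
  assumes "0 < w v" shows "weight_pos w (pconst c * pvar v)"
proof -
  have "keys (pconst c * pvar v) \<subseteq> {single v 1}"
    using keys_pconst_mult[of c "pvar v"] by (simp add: pvar_def)
  then show ?thesis using assms by (auto simp: weight_pos_def weighted_deg_def)
qed

lemma weight_pos_eval_monom:
  assumes "v \<in> keys m" "weight_pos w (\<sigma> v)"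
  shows "weight_pos w (eval_monom \<sigma> m)"
proof -
  obtain k where k: "lookup m v = Suc k" using assms(1) not0_implies_Suc by (auto simp: in_keys_iff)
  have "eval_monom \<sigma> m = \<sigma> v ^ lookup m v * (\<Prod>u\<in>keys m - {v}. \<sigma> u ^ lookup m u)"
    unfolding eval_monom_def using assms(1) by (simp add: prod.remove)
  also have "\<dots> = \<sigma> v * (\<sigma> v ^ k * (\<Prod>u\<in>keys m - {v}. \<sigma> u ^ lookup m u))"
    by (simp add: k mult.assoc)
  finally show ?thesis using assms(2) weight_pos_mult_left by metis
qed

lemma weight_pos_psubst:
  assumes "weight_pos w P" "\<And>v. 0 < w v \<Longrightarrow> weight_pos w (\<sigma> v)"
  shows "weight_pos w (psubst \<sigma> P)"
  unfolding psubst_def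
proof (intro weight_pos_sum weight_pos_mult_right)
  fix m assume "m \<in> keys P"
  then obtain v where "v \<in> keys m" "0 < w v"
    using assms(1) weighted_deg_pos_obtain by (metis weight_pos_def)
  then show "weight_pos w (eval_monom \<sigma> m)" using assms(2) weight_pos_eval_monom by blast
qed

lemma weight_pos_linY: "weight_pos y_weight (linY l)"
  unfolding linY_def by (intro weight_pos_sum weight_pos_pvar) (simp add: y_weight_def)

lemma weight_pos_linZ: "weight_pos z_weight (linZ l)"
  unfolding linZ_def by (intro weight_pos_sum weight_pos_pvar) (simp add: z_weight_def)

lemma bic_add_carrier: "a \<in> bic_carrier \<Longrightarrow> b \<in> bic_carrier \<Longrightarrow> bic_add a b \<in> bic_carrier"
  by (simp add: bic_carrier_iff bic_add_def weight_pos_add)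

lemma bic_smul_carrier: "a \<in> bic_carrier \<Longrightarrow> bic_smul c a \<in> bic_carrier"
  by (simp add: bic_carrier_iff bic_smul_def weight_pos_mult_right)

lemma bic_mul_carrier: "a \<in> bic_carrier \<Longrightarrow> b \<in> bic_carrier \<Longrightarrow> bic_mul a b \<in> bic_carrier"
  by (simp add: bic_carrier_iff bic_mul_def weight_pos_mult_left weight_pos_mult_right
      weight_pos_add weight_pos_linY weight_pos_linZ)

lemma bic_x_carrier: "bic_x i \<in> bic_carrier"
  by (simp add: bic_carrier_iff bic_x_def weight_pos_def)

lemma bic_zero_carrier: "bic_zero \<in> bic_carrier"
  by (simp add: bic_carrier_iff bic_zero_def weight_pos_def)

lemma is_endo_lin_endo:
  fixes E :: "nat \<Rightarrow> (nat \<Rightarrow>\<^sub>0 'k::comm_ring_1)"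
  shows "is_endo (lin_endo E)"
  unfolding is_endo_def
proof (intro conjI ballI allI)
  fix a :: "'k bic" assume "a \<in> bic_carrier"
  moreover have "weight_pos y_weight (lin_subst E v)" if "0 < y_weight v" for v
    using that by (cases v) (simp_all add: y_weight_def weight_pos_linY)
  moreover have "weight_pos z_weight (lin_subst E v)" if "0 < z_weight v" for v
    using that by (cases v) (simp_all add: z_weight_def weight_pos_linZ)
  ultimately show "lin_endo E a \<in> bic_carrier"
    by (simp add: bic_carrier_iff lin_endo_def weight_pos_psubst)
next
  fix a b :: "'k bic"
  show "lin_endo E (bic_add a b) = bic_add (lin_endo E a) (lin_endo E b)"
    by (simp add: lin_endo_def bic_add_def lin_ext_add psubst_add)
  show "lin_endo E (bic_mul a b) = bic_mul (lin_endo E a) (lin_endo E b)"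
    by (simp add: lin_endo_def bic_mul_def psubst_add psubst_mult psubst_lin_subst_linY psubst_lin_subst_linZ)
next
  fix c and a :: "'k bic"
  show "lin_endo E (bic_smul c a) = bic_smul c (lin_endo E a)"
    by (simp add: lin_endo_def bic_smul_def lin_ext_lin_scale psubst_mult)
qed

lemma lin_endo_x: "lin_endo E (bic_x j) = (E j, 0)"
  by (simp add: lin_endo_def bic_x_def lin_ext_single_one)

definition gl_lin :: "nat \<Rightarrow> (nat \<Rightarrow> nat \<Rightarrow> 'k::comm_ring_1) \<Rightarrow> nat \<Rightarrow> (nat \<Rightarrow>\<^sub>0 'k)" where
  "gl_lin d g j = (if j \<in> {1..d} then (\<Sum>i\<in>{1..d}. single i (g i j)) else single j 1)"

lemma gl_acts_gl_lin: "gl_acts d g (lin_endo (gl_lin d g))"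
  by (simp add: gl_acts_def is_endo_lin_endo lin_endo_x gl_lin_def xcomb_def)

definition diag_lin :: "(nat \<Rightarrow> 'k::comm_ring_1) \<Rightarrow> nat \<Rightarrow> (nat \<Rightarrow>\<^sub>0 'k)" where
  "diag_lin c j = single j (c j)"

lemma gl_lin_diag:
  "gl_lin d (\<lambda>i j. if i = j then t i else 0) = diag_lin (\<lambda>j. if j \<in> {1..d} then t j else 1)"
proof
  fix j
  have "(\<Sum>i\<in>{1..d}. single i (if i = j then t i else 0)) = (\<Sum>i\<in>{1..d}. if i = j then single j (t j) else 0)"
    by (intro sum.cong refl) auto
  then show "gl_lin d (\<lambda>i j. if i = j then t i else 0) j = diag_lin (\<lambda>j. if j \<in> {1..d} then t j else 1) j"
    by (simp add: gl_lin_def diag_lin_def del: atLeastAtMost_iff)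
qed

lemma lin_subst_diag_lin: "lin_subst (diag_lin c) = (\<lambda>v. pconst (c (var_index v)) * pvar v)"
proof
  fix v show "lin_subst (diag_lin c) v = pconst (c (var_index v)) * pvar v"
    by (cases v) (simp_all add: diag_lin_def linY_single linZ_single)
qed

lemma lookup_lin_ext_diag_lin: "lookup (lin_ext (diag_lin c) l) i = c i * lookup l i"
proof -
  have "lookup (lin_ext (diag_lin c) l) i = (\<Sum>j\<in>keys l. if j = i then c i * lookup l i else 0)"
    unfolding lookup_lin_ext by (intro sum.cong refl) (auto simp: diag_lin_def lookup_single)
  also have "\<dots> = c i * lookup l i"
    by (auto simp: in_keys_iff)
  finally show ?thesis .
qed

text \<open>Monomials are eigenvectors of diagonal substitutions, so every monomial of an eigenvector
  carries its eigenvalue.\<close>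

lemma lin_endo_diag_eigenvector:
  fixes a :: "'k::field bic"
  assumes "lin_endo (diag_lin c) a = bic_smul \<kappa> a"
  shows lin_endo_diag_eigenvector_pol:
      "n \<in> keys (snd a) \<Longrightarrow> (\<Prod>u\<in>keys n. c (var_index u) ^ lookup n u) = \<kappa>"
    and lin_endo_diag_eigenvector_lin: "j \<in> keys (fst a) \<Longrightarrow> c j = \<kappa>"
proof -
  assume n: "n \<in> keys (snd a)"
  have "(\<Prod>u\<in>keys n. c (var_index u) ^ lookup n u) * lookup (snd a) n = \<kappa> * lookup (snd a) n"
    using arg_cong[OF assms, of "\<lambda>a. lookup (snd a) n"]
    by (simp add: lin_endo_def bic_smul_def lin_subst_diag_lin lookup_psubst_diag lookup_pconst_mult)
  then show "(\<Prod>u\<in>keys n. c (var_index u) ^ lookup n u) = \<kappa>"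
    using n by (simp add: in_keys_iff)
next
  assume j: "j \<in> keys (fst a)"
  have "c j * lookup (fst a) j = \<kappa> * lookup (fst a) j"
    using arg_cong[OF assms, of "\<lambda>a. lookup (fst a) j"]
    by (simp add: lin_endo_def bic_smul_def lookup_lin_ext_diag_lin)
  then show "c j = \<kappa>" using j by (simp add: in_keys_iff)
qed

definition pol_part :: "'k::comm_ring_1 bic set \<Rightarrow> 'k pol set" where
  "pol_part I = {Q. (0, Q) \<in> I}"

lemma pol_ideal_pol_part:
  fixes I :: "'k::comm_ring_1 bic set"
  assumes "is_T_ideal I" shows "pol_ideal (pol_part I)"
proof (rule pol_ideal_intro)
  have sub: "is_subspace I" and ideal: "\<forall>a\<in>bic_carrier. \<forall>b\<in>I. bic_mul a b \<in> I \<and> bic_mul b a \<in> I"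
    using assms by (auto simp: is_T_ideal_def)
  show "0 \<in> pol_part I" using sub by (simp add: pol_part_def is_subspace_def bic_zero_def)
  show "x + y \<in> pol_part I" if "x \<in> pol_part I" "y \<in> pol_part I" for x y
    using sub that unfolding pol_part_def is_subspace_def bic_add_def by force
  show "pconst c * x \<in> pol_part I" if "x \<in> pol_part I" for c x
    using sub that unfolding pol_part_def is_subspace_def bic_smul_def by force
  show "pvar v * x \<in> pol_part I" if "x \<in> pol_part I" for v x
  proof (cases v)
    case (Yv i)
    have "bic_mul (bic_x i) (0, x) \<in> I" using ideal that bic_x_carrier by (auto simp: pol_part_def)
    then show ?thesis using Yv by (simp add: pol_part_def bic_mul_def bic_x_def linY_single)
  next
    case (Zv j)
    have "bic_mul (0, x) (bic_x j) \<in> I" using ideal that bic_x_carrier by (auto simp: pol_part_def)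
    then show ?thesis using Zv by (simp add: pol_part_def bic_mul_def bic_x_def linZ_single mult.commute)
  qed
qed

lemma T_ideal_lin_endo: "is_T_ideal I \<Longrightarrow> a \<in> I \<Longrightarrow> lin_endo E a \<in> I"
  using is_endo_lin_endo[of E] unfolding is_T_ideal_def by blast

lemma T_ideal_psubst_lin_subst:
  "is_T_ideal I \<Longrightarrow> P \<in> pol_part I \<Longrightarrow> psubst (lin_subst E) P \<in> pol_part I"
  using T_ideal_lin_endo[of I "(0, P)" E] by (simp add: pol_part_def lin_endo_def lin_ext_def)

lemma irreducible_subset_T_ideal:
  fixes f :: "'k::comm_ring_1 bic"
  assumes "irreducible_GL d M" "f \<in> M" "f \<noteq> bic_zero" "is_T_ideal I" "f \<in> I"
  shows "M \<subseteq> I"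
proof -
  have subM: "is_subspace M" "M \<subseteq> Fd d" and clM: "\<forall>g h. invertible_mat d g \<and> gl_acts d g h \<longrightarrow> h ` M \<subseteq> M"
    using assms(1) by (auto simp: irreducible_GL_def is_GL_submodule_def)
  have subI: "is_subspace I" and clI: "\<forall>h. is_endo h \<longrightarrow> h ` I \<subseteq> I"
    using assms(4) by (auto simp: is_T_ideal_def)
  have "is_GL_submodule d (I \<inter> M)"
    unfolding is_GL_submodule_def
  proof (intro conjI allI impI)
    show "is_subspace (I \<inter> M)" using subM(1) subI by (auto simp: is_subspace_def)
    show "I \<inter> M \<subseteq> Fd d" using subM(2) by auto
    fix g and h :: "'k bic \<Rightarrow> 'k bic" assume "invertible_mat d g \<and> gl_acts d g h"
    then have "h ` I \<subseteq> I" "h ` M \<subseteq> M" using clM clI by (auto simp: gl_acts_def)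
    then show "h ` (I \<inter> M) \<subseteq> I \<inter> M" by blast
  qed
  then have "I \<inter> M = {bic_zero} \<or> I \<inter> M = M"
    using assms(1) by (auto simp: irreducible_GL_def)
  then show ?thesis using assms by auto
qed

lemma Fd_subset_carrier: "Fd d \<subseteq> (bic_carrier :: 'k::comm_ring_1 bic set)"
proof -
  have "is_subspace (bic_carrier :: 'k bic set)"
    by (auto simp: is_subspace_def bic_zero_carrier bic_add_carrier bic_smul_carrier)
  then show ?thesis unfolding Fd_def using bic_mul_carrier bic_x_carrier by blast
qed

lemma Fd_fixed:
  fixes v :: "'k::comm_ring_1 bic"
  assumes "v \<in> Fd d"
  shows "lin_endo (diag_lin (\<lambda>j. if j \<in> {1..d} then 1 else 0)) v = v"
proof -
  define h where "h = lin_endo (diag_lin (\<lambda>j. if j \<in> {1..d} then 1 else (0::'k)))"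
  let ?S = "{a \<in> bic_carrier. h a = a}"
  have "is_endo h" unfolding h_def by (rule is_endo_lin_endo)
  then have hadd: "h (bic_add a b) = bic_add (h a) (h b)"
    and hmul: "h (bic_mul a b) = bic_mul (h a) (h b)"
    and hsmul: "h (bic_smul c a) = bic_smul c (h a)"
    if "a \<in> bic_carrier" "b \<in> bic_carrier" for a b c
    using that unfolding is_endo_def by blast+
  have "is_subspace ?S"
    unfolding is_subspace_def
  proof (intro conjI ballI allI)
    show "?S \<subseteq> bic_carrier" by auto
    show "bic_zero \<in> ?S"
      using bic_zero_carrier by (simp add: h_def lin_endo_def lin_ext_def bic_zero_def)
    show "bic_add a b \<in> ?S" if "a \<in> ?S" "b \<in> ?S" for a b
      using that by (auto simp: hadd bic_add_carrier)
    show "bic_smul c a \<in> ?S" if "a \<in> ?S" for c a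
      using that hsmul[of a a c] by (auto simp: bic_smul_carrier)
  qed
  moreover have "\<forall>a\<in>?S. \<forall>b\<in>?S. bic_mul a b \<in> ?S"
    by (auto simp: hmul bic_mul_carrier)
  moreover have "h (bic_x i) = bic_x i" if "i \<in> {1..d}" for i
    using that by (simp add: h_def lin_endo_x diag_lin_def del: atLeastAtMost_iff) (simp add: bic_x_def)
  then have "\<forall>i\<in>{1..d}. bic_x i \<in> ?S"
    using bic_x_carrier by blast
  ultimately have "Fd d \<subseteq> ?S" unfolding Fd_def by blast
  then show ?thesis using assms by (auto simp: h_def)
qed

lemma bic_smul_one [simp]: "bic_smul 1 a = a"
proof -
  have "Poly_Mapping.map (\<lambda>x. x) (fst a) = fst a"
    by (rule poly_mapping_eqI) (simp add: Poly_Mapping.map.rep_eq when_def)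
  then show ?thesis by (simp add: bic_smul_def)
qed

lemma Fd_pol_index:
  fixes v :: "'k::field bic"
  assumes "v \<in> Fd d" "n \<in> keys (snd v)" "u \<in> keys n"
  shows "var_index u \<in> {1..d}"
proof (rule ccontr)
  assume out: "var_index u \<notin> {1..d}"
  have "(\<Prod>u\<in>keys n. (if var_index u \<in> {1..d} then 1 else 0) ^ lookup n u) = (1::'k)"
    using Fd_fixed[OF assms(1)] assms(2) by (intro lin_endo_diag_eigenvector_pol) simp_all
  moreover have "(\<Prod>u\<in>keys n. (if var_index u \<in> {1..d} then 1 else 0) ^ lookup n u) = (0::'k)"
    using assms(3) out by (intro prod_zero) (auto simp: in_keys_iff intro!: bexI[of _ u])
  ultimately show False by simp
qed

lemma Fd_lin_index:
  fixes v :: "'k::field bic"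
  assumes "v \<in> Fd d" "j \<in> keys (fst v)"
  shows "j \<in> {1..d}"
proof -
  have "(\<lambda>j. if j \<in> {1..d} then 1 else 0) j = (1::'k)"
    using Fd_fixed[OF assms(1)] assms(2) by (intro lin_endo_diag_eigenvector_lin[of _ v]) simp_all
  then show ?thesis by (simp split: if_splits)
qed

section \<open>Highest weight vectors\<close>

lemma prod_index_deg: "(\<Prod>u\<in>keys n. (if var_index u = i then x else 1) ^ lookup n u) = x ^ index_deg i n"
  unfolding index_deg_def power_sum by (intro prod.cong refl) auto

lemma index_deg_zero_D: "index_deg i n = 0 \<Longrightarrow> u \<in> keys n \<Longrightarrow> var_index u \<noteq> i"
proof
  assume "index_deg i n = 0" "u \<in> keys n" "var_index u = i"
  then have "(if var_index u = i then lookup n u else 0) = 0"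
    unfolding index_deg_def by (force simp: sum_eq_0_iff)
  then show False using \<open>var_index u = i\<close> using \<open>u \<in> keys n\<close> by (simp add: in_keys_iff)
qed

lemma ydeg_plus_zdeg:
  assumes "\<forall>u\<in>keys n. var_index u \<in> {1, 2}"
  shows "ydeg n + zdeg n = index_deg 1 n + index_deg 2 n"
proof -
  have "ydeg n + zdeg n = (\<Sum>u\<in>keys n. lookup n u)"
    unfolding ydeg_eq_weighted_deg zdeg_eq_weighted_deg weighted_deg_def sum.distrib[symmetric]
    by (intro sum.cong refl) (auto simp: y_weight_def z_weight_def split: var.split)
  also have "\<dots> = index_deg 1 n + index_deg 2 n"
    unfolding index_deg_def sum.distrib[symmetric] using assms by (intro sum.cong refl) auto
  finally show ?thesis .
qed

definition index_scaling :: "nat \<Rightarrow> 'k::comm_ring_1 \<Rightarrow> var \<Rightarrow> 'k pol" where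
  "index_scaling i c u = pconst (if var_index u = i then c else 1) * pvar u"

lemma lookup_psubst_index_scaling:
  "lookup (psubst (index_scaling i c) p) m = c ^ index_deg i m * lookup p m"
  unfolding index_scaling_def by (simp only: lookup_psubst_diag prod_index_deg)

lemma psubst_index_scaling_iff:
  fixes p :: "'k::field_char_0 pol"
  shows "psubst (index_scaling i 2) p = pconst 2 ^ k * p \<longleftrightarrow> (\<forall>m\<in>keys p. index_deg i m = k)"
proof
  assume eig: "psubst (index_scaling i 2) p = pconst 2 ^ k * p"
  show "\<forall>m\<in>keys p. index_deg i m = k"
  proof
    fix m assume m: "m \<in> keys p"
    have "(2::'k) ^ index_deg i m * lookup p m = 2 ^ k * lookup p m"
      using arg_cong[OF eig, of "\<lambda>q. lookup q m"]
      by (simp add: lookup_psubst_index_scaling lookup_pconst_mult pconst_power[symmetric])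
    then show "index_deg i m = k" using m by (simp add: in_keys_iff two_power_inj)
  qed
next
  assume "\<forall>m\<in>keys p. index_deg i m = k"
  then have "psubst (index_scaling i 2) p = pconst 2 ^ k * psubst pvar p"
    by (intro psubst_homogeneous) (auto simp: index_scaling_def)
  then show "psubst (index_scaling i 2) p = pconst 2 ^ k * p" by simp
qed

lemma hw_vector_torus:
  fixes v :: "'k::field_char_0 bic"
  assumes "hw_vector d wt v" "i \<in> {1..d}"
  shows "lin_endo (diag_lin (\<lambda>j. if j = i then 2 else 1)) v = bic_smul (2 ^ wt i) v"
proof -
  define t where "t j = (if j = i then 2 else (1::'k))" for j
  have "\<forall>j\<in>{1..d}. t j \<noteq> 0" by (simp add: t_def)
  then have "lin_endo (gl_lin d (\<lambda>i j. if i = j then t i else 0)) v = bic_smul (\<Prod>j\<in>{1..d}. t j ^ wt j) v"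
    using assms(1) gl_acts_gl_lin[of d "\<lambda>i j. if i = j then t i else 0"] unfolding hw_vector_def by blast
  moreover have "(\<lambda>j. if j \<in> {1..d} then t j else 1) = t"
    using assms(2) by (auto simp: t_def)
  then have "gl_lin d (\<lambda>i j. if i = j then t i else 0) = diag_lin t"
    by (simp only: gl_lin_diag)
  moreover have "(\<Prod>j\<in>{1..d}. t j ^ wt j) = (\<Prod>j\<in>{1..d}. if j = i then 2 ^ wt i else 1)"
    by (intro prod.cong refl) (simp add: t_def)
  ultimately show ?thesis using assms(2) by (simp add: t_def [abs_def])
qed

lemma hw_vector_index_deg:
  fixes v :: "'k::field_char_0 bic"
  assumes "hw_vector d wt v" "i \<in> {1..d}" "n \<in> keys (snd v)"
  shows "index_deg i n = wt i"
proof -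
  have "(\<Prod>u\<in>keys n. (if var_index u = i then 2 else 1) ^ lookup n u) = (2::'k) ^ wt i"
    using lin_endo_diag_eigenvector_pol[OF hw_vector_torus[OF assms(1,2)] assms(3)]
    by (simp add: if_distrib cong: if_cong)
  then show ?thesis by (simp add: prod_index_deg two_power_inj)
qed

lemma hw_vector_lin_weight:
  fixes v :: "'k::field_char_0 bic"
  assumes "hw_vector d wt v" "i \<in> {1..d}" "j \<in> keys (fst v)"
  shows "wt i = (if j = i then 1 else 0)"
proof -
  have "(if j = i then 2 else 1) = (2::'k) ^ wt i"
    using lin_endo_diag_eigenvector_lin[OF hw_vector_torus[OF assms(1,2)] assms(3)] by simp
  then show ?thesis using two_power_inj[of "wt i" 1] two_power_inj[of "wt i" 0]
    by (auto split: if_splits)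
qed

definition homogeneous12 :: "nat \<Rightarrow> nat \<Rightarrow> 'k::comm_ring_1 pol \<Rightarrow> bool" where
  "homogeneous12 a b P \<longleftrightarrow> (\<forall>m\<in>keys P. (\<forall>u\<in>keys m. var_index u \<in> {1, 2}) \<and>
     index_deg 1 m = a \<and> index_deg 2 m = b)"

lemma hw_vector_homogeneous12:
  fixes v :: "'k::field_char_0 bic"
  assumes hw: "hw_vector d (wt2 a b) v" and Fd: "v \<in> Fd d" and d: "b = 0 \<or> 2 \<le> d"
  shows "homogeneous12 a b (snd v)"
  unfolding homogeneous12_def
proof (intro ballI conjI)
  fix n assume n: "n \<in> keys (snd v)"
  have index: "var_index u \<in> {1..d}" if "u \<in> keys n" for u
    using Fd_pol_index[OF Fd n that] .
  show "var_index u \<in> {1, 2}" if u: "u \<in> keys n" for u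
  proof (rule ccontr)
    assume "var_index u \<notin> {1, 2}"
    then have "index_deg (var_index u) n = 0"
      using hw_vector_index_deg[OF hw index[OF u] n] by (simp add: wt2_def)
    then show False using index_deg_zero_D u by blast
  qed
  have "0 < ydeg n" using Fd Fd_subset_carrier n by (auto simp: bic_carrier_def)
  then obtain u where "u \<in> keys n"
    unfolding ydeg_eq_weighted_deg by (rule weighted_deg_pos_obtain)
  then have "1 \<in> {1..d}" using index by force
  then show "index_deg 1 n = a" using hw_vector_index_deg[OF hw _ n] by (simp add: wt2_def)
  show "index_deg 2 n = b"
  proof (cases "2 \<le> d")
    case True then show ?thesis using hw_vector_index_deg[OF hw _ n] by (simp add: wt2_def)
  next
    case False
    then have "var_index u \<noteq> 2" if "u \<in> keys n" for u using index[OF that] by auto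
    then have "index_deg 2 n = 0" unfolding index_deg_def by (intro sum.neutral) auto
    then show ?thesis using False d by simp
  qed
qed

lemma hw_vector_lin:
  fixes v :: "'k::field_char_0 bic"
  assumes hw: "hw_vector d (wt2 a b) v" and Fd: "v \<in> Fd d"
    and ab: "b \<le> a" "b = 0 \<or> 2 \<le> d" and lin: "fst v \<noteq> 0"
  shows "a = 1 \<and> b = 0 \<and> snd v = 0"
proof -
  obtain j where j: "j \<in> keys (fst v)" using lin by (metis keys_eq_empty ex_in_conv)
  have jd: "j \<in> {1..d}" by (rule Fd_lin_index[OF Fd j])
  have "wt2 a b j = 1" using hw_vector_lin_weight[OF hw jd j] by simp
  moreover have "a = (if j = 1 then 1 else 0)"
    using hw_vector_lin_weight[OF hw _ j, of 1] jd by (simp add: wt2_def)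
  ultimately have "j = 1" "a = 1" using ab(1) by (auto simp: wt2_def split: if_splits)
  moreover have "b = 0"
    using ab(2) hw_vector_lin_weight[OF hw _ j, of 2] \<open>j = 1\<close> by (auto simp: wt2_def)
  moreover have "snd v = 0"
  proof (rule ccontr)
    assume "snd v \<noteq> 0"
    then obtain n where n: "n \<in> keys (snd v)" by (metis keys_eq_empty ex_in_conv)
    have "homogeneous12 a b (snd v)" using hw Fd ab(2) by (rule hw_vector_homogeneous12)
    then have "ydeg n + zdeg n = 1"
      using n ydeg_plus_zdeg[of n] \<open>a = 1\<close> \<open>b = 0\<close> by (simp add: homogeneous12_def)
    moreover have "0 < ydeg n" "0 < zdeg n" using Fd Fd_subset_carrier n by (auto simp: bic_carrier_def)
    ultimately show False by simp
  qed
  ultimately show ?thesis by simp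
qed

section \<open>Shear invariance and divisibility by the determinant\<close>

abbreviation det12 :: "'k::comm_ring_1 pol" where
  "det12 \<equiv> yy 1 * zz 2 - yy 2 * zz 1"

lemma det12_nonzero: "(det12 :: 'k::field pol) \<noteq> 0"
proof
  assume "(det12 :: 'k pol) = 0"
  then have "psubst (\<lambda>u. pconst (if u = Yv 1 \<or> u = Zv 2 then 1 else 0)) (det12 :: 'k pol) = 0" by simp
  then show False by (simp add: psubst_simps)
qed

lemma var_index_eq_iff: "var_index u = i \<longleftrightarrow> u = Yv i \<or> u = Zv i"
  by (cases u) auto

lemma homogeneous12_vars: "homogeneous12 a b P \<Longrightarrow> vars P \<subseteq> {Yv 1, Zv 1, Yv 2, Zv 2}"
  unfolding homogeneous12_def by (intro vars_subset) (auto simp: var_index_eq_iff)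

lemma homogeneous12_vars_index1: "homogeneous12 a 0 P \<Longrightarrow> vars P \<subseteq> {Yv 1, Zv 1}"
  unfolding homogeneous12_def
  by (intro vars_subset) (metis index_deg_zero_D insert_iff singletonD var_index_eq_iff)

lemma psubst_homogeneous12_fixed:
  assumes "homogeneous12 a b P" and "\<And>v. var_index v \<in> {1, 2} \<Longrightarrow> \<sigma> v = pvar v"
  shows "psubst \<sigma> P = P"
proof -
  have "psubst \<sigma> P = psubst pvar P"
    using assms by (intro psubst_cong_vars[OF homogeneous12_vars]) auto
  then show ?thesis by simp
qed

definition shear :: "'k::comm_ring_1 pol \<Rightarrow> 'k pol \<Rightarrow> var \<Rightarrow> 'k pol" where
  "shear A B = pvar(Yv 2 := A * yy 2 + B * yy 1, Zv 2 := A * zz 2 + B * zz 1)"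

lemma psubst_shear_scaling:
  assumes "homogeneous12 a b P" shows "psubst (shear L 0) P = L ^ b * P"
proof -
  have "psubst (shear L 0) P = L ^ b * psubst pvar P"
    using assms
    by (intro psubst_homogeneous[where i = 2]) (auto simp: shear_def homogeneous12_def var_index_eq_iff)
  then show ?thesis by simp
qed

lemma psubst_shear_comp:
  assumes "psubst (shear A 0) B = B"
  shows "psubst (shear A 0) (psubst (shear 1 B) P) = psubst (shear A B) P"
proof -
  have "(\<lambda>v. psubst (shear A 0) (shear 1 B v)) = shear A B"
    using assms by (auto simp: fun_eq_iff shear_def psubst_simps)
  then show ?thesis by (simp add: psubst_comp)
qed

text \<open>Variables of index 0 do not occur in a \<open>homogeneous12\<close> polynomial, so they serve as
  fresh indeterminates for the Vandermonde argument.\<close>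

lemma psubst_shear:
  fixes P :: "'k::field_char_0 pol"
  assumes hom: "homogeneous12 a b P" and inv: "\<And>s. psubst (shear 1 (pconst s)) P = P"
    and B: "\<And>X. psubst (pvar(Yv 0 := X)) B = B"
  shows "psubst (shear A B) P = A ^ b * P"
proof -
  note varsP = homogeneous12_vars[OF hom]
  define y0 z0 :: "'k pol" where "y0 = pvar (Yv 0)" and "z0 = pvar (Zv 0)"
  define \<Phi> where "\<Phi> = psubst (shear y0 z0) P - y0 ^ b * P"
  have eval_\<Phi>: "psubst (pvar(Zv 0 := B')) (psubst (pvar(Yv 0 := A')) \<Phi>)
      = psubst (shear A' B') P - A' ^ b * P" if "psubst (pvar(Zv 0 := B')) A' = A'" for A' B'
  proof -
    have "psubst (pvar(Zv 0 := B')) (psubst (pvar(Yv 0 := A')) (psubst (shear y0 z0) P)) = psubst (shear A' B') P"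
      unfolding psubst_comp using that
      by (intro psubst_cong_vars[OF varsP]) (auto simp: shear_def psubst_simps y0_def z0_def)
    moreover have "psubst (pvar(Zv 0 := B')) (psubst (pvar(Yv 0 := A')) P) = P"
      unfolding psubst_comp by (intro psubst_homogeneous12_fixed[OF hom]) auto
    ultimately show ?thesis
      using that by (simp add: \<Phi>_def psubst_simps y0_def)
  qed
  have "psubst (pvar(Yv 0 := A)) (psubst (pvar(Zv 0 := B)) \<Phi>) \<in> {0}"
  proof (rule pol_ideal_psubst_two_vars[OF pol_ideal_zero_set])
    show "Yv 0 \<noteq> Zv 0" "\<And>X. psubst (pvar(Yv 0 := X)) B = B" using B by simp_all
    fix s1 s2 :: 'k
    have "psubst (shear (pconst s1) (pconst s2)) P = pconst s1 ^ b * P"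
      using psubst_shear_comp[of "pconst s1" "pconst s2" P] inv psubst_shear_scaling[OF hom] by simp
    then show "psubst (pvar(Zv 0 := pconst s2)) (psubst (pvar(Yv 0 := pconst s1)) \<Phi>) \<in> {0}"
      by (simp add: eval_\<Phi>)
  qed
  moreover have "psubst (pvar(Yv 0 := A)) (psubst (pvar(Zv 0 := B)) \<Phi>)
      = psubst (shear A B) P - A ^ b * P"
  proof -
    have "psubst (pvar(Yv 0 := A)) (psubst (pvar(Zv 0 := B)) (psubst (shear y0 z0) P)) = psubst (shear A B) P"
      unfolding psubst_comp using B
      by (intro psubst_cong_vars[OF varsP]) (auto simp: shear_def psubst_simps y0_def z0_def)
    moreover have "psubst (pvar(Yv 0 := A)) (psubst (pvar(Zv 0 := B)) P) = P"
      unfolding psubst_comp by (intro psubst_homogeneous12_fixed[OF hom]) auto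
    ultimately show ?thesis by (simp add: \<Phi>_def psubst_simps y0_def)
  qed
  ultimately show ?thesis by simp
qed

lemma pvar_power_nonzero: "(pvar v ^ k :: 'k::comm_ring_1 pol) \<noteq> 0"
  by (metis pvar_power lookup_single_eq lookup_zero zero_neq_one)

lemma pvar_power_dvd:
  fixes q r :: "'k::comm_ring_1 pol"
  assumes "w \<noteq> w'" and eq: "pvar w' ^ b * q = pvar w ^ b * r"
  shows "pvar w ^ b dvd q"
proof -
  have large: "b \<le> lookup m w" if m: "m \<in> keys q" for m
  proof -
    have "lookup (pvar w' ^ b * q) (single w' b + m) = lookup q m"
      by (simp add: pvar_power lookup_single_mult)
    then have "lookup (pvar w ^ b * r) (single w' b + m) = lookup q m"
      by (simp only: eq)
    then have "single w' b + m \<in> keys (single (single w b) 1 * r)"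
      using m by (simp add: in_keys_iff pvar_power)
    then obtain n where "single w' b + m = single w b + n"
      using keys_single_mult by blast
    then have "lookup (single w' b + m) w = lookup (single w b + n) w" by simp
    then show ?thesis using assms(1) by (simp add: lookup_add lookup_single when_def)
  qed
  define p where "p = Poly_Mapping.map_key (\<lambda>n. single w b + n) q"
  have lookup_p: "lookup p n = lookup q (single w b + n)" for n
    by (simp add: p_def Poly_Mapping.map_key.rep_eq inj_on_def)
  have "q = pvar w ^ b * p"
  proof (rule poly_mapping_eqI)
    fix m
    show "lookup q m = lookup (pvar w ^ b * p) m"
    proof (cases "b \<le> lookup m w")
      case True
      then have "m = single w b + (m - single w b)"
        by (intro poly_mapping_eqI) (auto simp: lookup_add lookup_minus lookup_single when_def)
      then show ?thesis
        by (metis lookup_p lookup_single_mult mult_1 pvar_power)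
    next
      case False
      have "m \<notin> keys (pvar w ^ b * p)"
        using keys_single_mult[of "single w b" 1 p] False by (auto simp: pvar_power lookup_add)
      then show ?thesis using False large by (auto simp: in_keys_iff)
    qed
  qed
  then show ?thesis by (rule dvdI)
qed

lemma det12_power_dvd:
  fixes P :: "'k::field_char_0 pol"
  assumes hom: "homogeneous12 a b P" and inv: "\<And>s. psubst (shear 1 (pconst s)) P = P"
  shows "det12 ^ b dvd P"
proof -
  note varsP = homogeneous12_vars[OF hom]
  have index2: "\<And>m. m \<in> keys P \<Longrightarrow> index_deg 2 m = b" using hom by (simp add: homogeneous12_def)
  define q1 q2 where "q1 = psubst (pvar(Yv 2 := 0, Zv 2 := 1)) P"
    and "q2 = psubst (pvar(Yv 2 := 1, Zv 2 := 0)) P"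
  text \<open>The shears \<open>x\<^sub>2 \<mapsto> y\<^sub>1x\<^sub>2 - y\<^sub>2x\<^sub>1\<close> and \<open>x\<^sub>2 \<mapsto> z\<^sub>1x\<^sub>2 - z\<^sub>2x\<^sub>1\<close> send one variable of index 2
    to \<open>0\<close> and the other to \<open>\<plusminus>det12\<close>.\<close>
  have "yy 1 ^ b * P = psubst (shear (yy 1) (- yy 2)) P"
    by (rule psubst_shear[OF hom inv, symmetric]) (simp add: psubst_simps)
  also have "\<dots> = psubst (\<lambda>u. if var_index u = 2 then det12 * (pvar(Yv 2 := 0, Zv 2 := 1)) u
      else (pvar(Yv 2 := 0, Zv 2 := 1)) u) P"
    by (intro psubst_cong_vars[OF varsP]) (auto simp: shear_def algebra_simps)
  also have "\<dots> = det12 ^ b * q1"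
    unfolding q1_def using index2 by (intro psubst_homogeneous) auto
  finally have e1: "yy 1 ^ b * P = det12 ^ b * q1" .
  have "zz 1 ^ b * P = psubst (shear (zz 1) (- zz 2)) P"
    by (rule psubst_shear[OF hom inv, symmetric]) (simp add: psubst_simps)
  also have "\<dots> = psubst (\<lambda>u. if var_index u = 2 then (- det12) * (pvar(Yv 2 := 1, Zv 2 := 0)) u
      else (pvar(Yv 2 := 1, Zv 2 := 0)) u) P"
    by (intro psubst_cong_vars[OF varsP]) (auto simp: shear_def algebra_simps)
  also have "\<dots> = (- det12) ^ b * q2"
    unfolding q2_def using index2 by (intro psubst_homogeneous) auto
  finally have e2: "zz 1 ^ b * P = (- det12) ^ b * q2" .
  have "det12 ^ b * (zz 1 ^ b * q1) = zz 1 ^ b * (yy 1 ^ b * P)"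
    unfolding e1 by (rule mult.left_commute)
  also have "\<dots> = yy 1 ^ b * (zz 1 ^ b * P)"
    by (simp add: mult_ac)
  also have "\<dots> = yy 1 ^ b * ((- 1) ^ b * det12 ^ b * q2)"
    by (simp only: e2 power_minus[of det12])
  also have "\<dots> = det12 ^ b * (yy 1 ^ b * ((- 1) ^ b * q2))"
    by (simp only: mult_ac)
  finally have "zz 1 ^ b * q1 = yy 1 ^ b * ((- 1) ^ b * q2)"
    using mult_left_cancel[OF power_not_zero[OF det12_nonzero], of b] by blast
  then have "yy 1 ^ b dvd q1"
    by (intro pvar_power_dvd[of "Yv 1" "Zv 1" b q1 "(- 1) ^ b * q2"]) simp_all
  then obtain p where "q1 = yy 1 ^ b * p" by (rule dvdE)
  then have "yy 1 ^ b * P = yy 1 ^ b * (det12 ^ b * p)"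
    using e1 by (simp add: mult_ac)
  then have "P = det12 ^ b * p"
    using mult_left_cancel[OF pvar_power_nonzero[of "Yv 1" b]] by blast
  then show ?thesis by simp
qed

lemma psubst_index_indicator_fixed_D:
  fixes p :: "'k::field pol"
  assumes "psubst (\<lambda>u. pconst (if var_index u \<in> S then 1 else 0) * pvar u) p = p"
    and "n \<in> keys p" "u \<in> keys n"
  shows "var_index u \<in> S"
proof (rule ccontr)
  assume out: "var_index u \<notin> S"
  have "(\<Prod>v\<in>keys n. (if var_index v \<in> S then 1 else 0) ^ lookup n v) * lookup p n = (lookup p n :: 'k)"
    using arg_cong[OF assms(1), of "\<lambda>q. lookup q n"] by (simp only: lookup_psubst_diag)
  moreover have "(\<Prod>v\<in>keys n. (if var_index v \<in> S then 1 else 0) ^ lookup n v) = (0::'k)"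
    using assms(3) out by (intro prod_zero) (auto simp: in_keys_iff intro!: bexI[of _ u])
  ultimately show False using assms(2) by (simp add: in_keys_iff)
qed

lemma homogeneous12_det12_cofactor:
  fixes P p :: "'k::field_char_0 pol"
  assumes hom: "homogeneous12 a b P" and P: "P = det12 ^ b * p" and "b \<le> a"
  shows "homogeneous12 (a - b) 0 p"
proof -
  have cancel: "q = r" if "det12 ^ b * q = det12 ^ b * r" for q r :: "'k pol"
    using that mult_left_cancel[OF power_not_zero[OF det12_nonzero]] by blast
  define \<kappa> where "\<kappa> = (\<lambda>u. pconst (if var_index u \<in> {1, 2} then 1 else 0) * (pvar u :: 'k pol))"
  have "det12 ^ b * psubst \<kappa> p = det12 ^ b * p"
    using psubst_homogeneous12_fixed[OF hom, of \<kappa>]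
    by (simp add: P \<kappa>_def psubst_simps)
  then have "psubst \<kappa> p = p" by (rule cancel)
  then have index: "var_index u \<in> {1, 2}" if "m \<in> keys p" "u \<in> keys m" for m u
    using psubst_index_indicator_fixed_D[of "{1, 2}" p m u] that unfolding \<kappa>_def by blast
  have deg: "\<forall>m\<in>keys p. index_deg i m = w - b"
    if i: "i \<in> {1, 2}" and w: "\<forall>m\<in>keys P. index_deg i m = w" "b \<le> w" for i w
  proof -
    have D: "psubst (index_scaling i 2) det12 = pconst 2 * (det12 :: 'k pol)"
      using i by (auto simp: psubst_simps index_scaling_def algebra_simps)
    have two: "pconst (2::'k) ^ b \<noteq> 0"
      using pconst_inj[of "2::'k" 0] by simp
    have "pconst 2 ^ b * (det12 ^ b * psubst (index_scaling i 2) p)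
        = psubst (index_scaling i 2) P"
      unfolding P by (simp only: psubst_mult psubst_power D power_mult_distrib mult.assoc)
    also have "\<dots> = pconst 2 ^ w * P"
      using w(1) psubst_index_scaling_iff by blast
    also have "\<dots> = pconst 2 ^ b * (det12 ^ b * (pconst 2 ^ (w - b) * p))"
      unfolding P using w(2) by (simp add: power_add[symmetric] mult_ac)
    finally have "det12 ^ b * psubst (index_scaling i 2) p = det12 ^ b * (pconst 2 ^ (w - b) * p)"
      using mult_left_cancel[OF two] by blast
    then have "psubst (index_scaling i 2) p = pconst 2 ^ (w - b) * p"
      by (rule cancel)
    then show ?thesis by (simp only: psubst_index_scaling_iff)
  qed
  show ?thesis
    using hom index deg[of 1 a] deg[of 2 b] \<open>b \<le> a\<close> by (simp add: homogeneous12_def)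
qed

section \<open>From the cofactor to a power of the determinant\<close>

lemma exists_nonzero_eval_two_vars:
  fixes p :: "'k::field_char_0 pol"
  assumes "p \<noteq> 0" "w1 \<noteq> w2"
  obtains c1 c2 where "psubst (pvar(w2 := pconst c2)) (psubst (pvar(w1 := pconst c1)) p) \<noteq> 0"
proof -
  have "\<exists>c1 c2. psubst (pvar(w2 := pconst c2)) (psubst (pvar(w1 := pconst c1)) p) \<noteq> 0"
  proof (rule ccontr)
    assume "\<not> ?thesis"
    then have zero: "psubst (pvar(w2 := pconst c2)) (psubst (pvar(w1 := pconst c1)) p) = 0" for c1 c2
      by simp
    have "psubst (pvar(w1 := pvar w1)) (psubst (pvar(w2 := pvar w2)) p) \<in> {0}"
      by (rule pol_ideal_psubst_two_vars[OF pol_ideal_zero_set]) (use assms(2) zero in auto)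
    then show False using assms(1) by simp
  qed
  then show ?thesis using that by blast
qed

definition mix1 :: "'k::comm_ring_1 pol \<Rightarrow> 'k pol \<Rightarrow> var \<Rightarrow> 'k pol" where
  "mix1 A B = pvar(Yv 1 := A * yy 1 + B * yy 2, Zv 1 := A * zz 1 + B * zz 2)"

text \<open>The choice \<open>A = c\<^sub>1z\<^sub>2 - c\<^sub>2y\<^sub>2\<close>, \<open>B = c\<^sub>2y\<^sub>1 - c\<^sub>1z\<^sub>1\<close> sends \<open>y\<^sub>1 \<mapsto> c\<^sub>1 det12\<close> and \<open>z\<^sub>1 \<mapsto> c\<^sub>2 det12\<close>.\<close>

lemma psubst_mix1_det12:
  fixes p :: "'k::comm_ring_1 pol"
  assumes "homogeneous12 k 0 p"
  shows "psubst (mix1 (pconst c1 * zz 2 - pconst c2 * yy 2) (pconst c2 * yy 1 - pconst c1 * zz 1)) p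
    = det12 ^ k * psubst (pvar(Yv 1 := pconst c1, Zv 1 := pconst c2)) p"
proof -
  let ?\<sigma> = "\<lambda>u. if var_index u = 1 then det12 * (pvar(Yv 1 := pconst c1, Zv 1 := pconst c2)) u
    else (pvar(Yv 1 := pconst c1, Zv 1 := pconst c2)) u"
  have "psubst (mix1 (pconst c1 * zz 2 - pconst c2 * yy 2) (pconst c2 * yy 1 - pconst c1 * zz 1)) p
      = psubst ?\<sigma> p"
    by (intro psubst_cong_vars[OF homogeneous12_vars_index1[OF assms]])
      (auto simp: mix1_def algebra_simps)
  also have "\<dots> = det12 ^ k * psubst (pvar(Yv 1 := pconst c1, Zv 1 := pconst c2)) p"
    using assms by (intro psubst_homogeneous) (auto simp: homogeneous12_def)
  finally show ?thesis .
qed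

lemma psubst_const_obtain:
  assumes "vars p \<subseteq> {Yv 1, Zv 1}"
  obtains \<gamma> where "psubst (pvar(Yv 1 := pconst c1, Zv 1 := pconst c2)) p = pconst \<gamma>"
proof -
  have "psubst (pvar(Yv 1 := pconst c1, Zv 1 := pconst c2)) p
      = psubst (\<lambda>u. pconst (if u = Yv 1 then c1 else if u = Zv 1 then c2 else 0)) p"
    by (rule psubst_cong_vars[OF assms]) auto
  then show ?thesis using that by (simp only: psubst_pconst_lookup)
qed

lemma pol_ideal_psubst_mix1:
  fixes p :: "'k::field_char_0 pol"
  assumes V: "pol_ideal V" and hom: "homogeneous12 k 0 p"
    and H: "\<And>s1 s2. s1 \<noteq> 0 \<Longrightarrow> s2 \<noteq> 0 \<Longrightarrow> det12 ^ b * psubst (mix1 (pconst s1) (pconst s2)) p \<in> V"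
    and B: "\<And>X. psubst (pvar(Yv 0 := X)) B = B"
  shows "det12 ^ b * psubst (mix1 A B) p \<in> V"
proof -
  note varsp = homogeneous12_vars_index1[OF hom]
  define \<Psi> where "\<Psi> = det12 ^ b * psubst (mix1 (pvar (Yv 0)) (pvar (Zv 0))) p"
  have "psubst (pvar(Yv 0 := A)) (psubst (pvar(Zv 0 := B)) \<Psi>) \<in> V"
  proof (rule pol_ideal_psubst_two_vars[OF V])
    show "Yv 0 \<noteq> Zv 0" "\<And>X. psubst (pvar(Yv 0 := X)) B = B" using B by simp_all
    fix s1 s2 :: 'k assume "s1 \<noteq> 0" "s2 \<noteq> 0"
    moreover have "psubst (pvar(Zv 0 := pconst s2)) (psubst (pvar(Yv 0 := pconst s1))
        (psubst (mix1 (pvar (Yv 0)) (pvar (Zv 0))) p)) = psubst (mix1 (pconst s1) (pconst s2)) p"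
      unfolding psubst_comp by (intro psubst_cong_vars[OF varsp]) (auto simp: mix1_def psubst_simps)
    ultimately show "psubst (pvar(Zv 0 := pconst s2)) (psubst (pvar(Yv 0 := pconst s1)) \<Psi>) \<in> V"
      using H by (simp add: \<Psi>_def psubst_simps)
  qed
  moreover have "psubst (pvar(Yv 0 := A)) (psubst (pvar(Zv 0 := B))
      (psubst (mix1 (pvar (Yv 0)) (pvar (Zv 0))) p)) = psubst (mix1 A B) p"
    unfolding psubst_comp using B by (intro psubst_cong_vars[OF varsp]) (auto simp: mix1_def psubst_simps)
  ultimately show ?thesis by (simp add: \<Psi>_def psubst_simps)
qed

lemma det12_power_in_ideal:
  fixes p :: "'k::field_char_0 pol"
  assumes V: "pol_ideal V" and "p \<noteq> 0" and hom: "homogeneous12 k 0 p"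
    and H: "\<And>s1 s2. s1 \<noteq> 0 \<Longrightarrow> s2 \<noteq> 0 \<Longrightarrow> det12 ^ b * psubst (mix1 (pconst s1) (pconst s2)) p \<in> V"
  shows "det12 ^ (b + k) \<in> V"
proof -
  note varsp = homogeneous12_vars_index1[OF hom]
  have eval: "psubst (pvar(Zv 1 := pconst c2)) (psubst (pvar(Yv 1 := pconst c1)) p)
      = psubst (pvar(Yv 1 := pconst c1, Zv 1 := pconst c2)) p" for c1 c2 :: 'k
    unfolding psubst_comp by (rule psubst_cong_vars[OF varsp]) auto
  obtain c1 c2 where "psubst (pvar(Zv 1 := pconst c2)) (psubst (pvar(Yv 1 := pconst c1)) p) \<noteq> 0"
    by (rule exists_nonzero_eval_two_vars[OF \<open>p \<noteq> 0\<close>, of "Yv 1" "Zv 1"]) simp_all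
  then have "psubst (pvar(Yv 1 := pconst c1, Zv 1 := pconst c2)) p \<noteq> 0" by (metis eval)
  moreover obtain \<gamma> where \<gamma>: "psubst (pvar(Yv 1 := pconst c1, Zv 1 := pconst c2)) p = pconst \<gamma>"
    using psubst_const_obtain[OF varsp] .
  ultimately have "\<gamma> \<noteq> 0" by auto
  have "det12 ^ b * psubst (mix1 (pconst c1 * zz 2 - pconst c2 * yy 2) (pconst c2 * yy 1 - pconst c1 * zz 1)) p \<in> V"
    by (rule pol_ideal_psubst_mix1[OF V hom H]) (simp_all add: psubst_simps)
  then have "pconst (1 / \<gamma>) * (det12 ^ b * (det12 ^ k * pconst \<gamma>)) \<in> V"
    using psubst_mix1_det12[OF hom, of c1 c2] \<gamma> pol_ideal_mult[OF V] by simp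
  moreover have "pconst (1 / \<gamma>) * (det12 ^ b * (det12 ^ k * pconst \<gamma>)) = det12 ^ (b + k)"
  proof -
    have "pconst (1 / \<gamma>) * (det12 ^ b * (det12 ^ k * pconst \<gamma>)) = pconst (1 / \<gamma> * \<gamma>) * (det12 ^ b * det12 ^ k)"
      by (simp only: pconst_mult mult_ac)
    also have "\<dots> = det12 ^ (b + k)" using \<open>\<gamma> \<noteq> 0\<close> by (simp add: power_add)
    finally show ?thesis .
  qed
  ultimately show ?thesis by simp
qed

lemma lin_subst_gl_lin_shear:
  fixes s :: "'k::comm_ring_1"
  assumes "2 \<le> d"
  shows "lin_subst (gl_lin d (\<lambda>i j. if i = j then 1 else if i = 1 \<and> j = 2 then s else 0))
    = shear 1 (pconst s)"
proof -
  let ?u = "\<lambda>i j. if i = j then 1 else if i = 1 \<and> j = 2 then s else 0"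
  have gl: "gl_lin d ?u j = single j 1 + (if j = 2 then single 1 s else 0)" for j
  proof (cases "j \<in> {1..d}")
    case True
    have "(\<Sum>i\<in>{1..d}. single i (?u i j))
        = (\<Sum>i\<in>{1..d}. (if i = j then single j 1 else 0) + (if i = 1 then (if j = 2 then single 1 s else 0) else 0))"
      by (intro sum.cong refl) auto
    also have "\<dots> = single j 1 + (if j = 2 then single 1 s else 0)"
      using True assms by (simp add: sum.distrib)
    finally show ?thesis using True by (simp add: gl_lin_def del: atLeastAtMost_iff)
  next
    case False
    then show ?thesis using assms by (auto simp: gl_lin_def)
  qed
  show ?thesis
  proof
    fix v show "lin_subst (gl_lin d ?u) v = shear 1 (pconst s) v"
      by (cases v) (simp_all add: gl linY_add linZ_add linY_single linZ_single shear_def)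
  qed
qed

lemma hw_vector_unipotent:
  assumes "hw_vector d wt v" "\<forall>i\<in>{1..d}. u i i = 1" "\<forall>i\<in>{1..d}. \<forall>j\<in>{1..d}. j < i \<longrightarrow> u i j = 0"
  shows "lin_endo (gl_lin d u) v = v"
proof -
  have "\<forall>u h. (\<forall>i\<in>{1..d}. u i i = 1) \<and> (\<forall>i\<in>{1..d}. \<forall>j\<in>{1..d}. j < i \<longrightarrow> u i j = 0)
      \<and> gl_acts d u h \<longrightarrow> h v = v"
    using assms(1) unfolding hw_vector_def by (elim conjE)
  then show ?thesis using assms(2,3) gl_acts_gl_lin[of d u] by (simp del: atLeastAtMost_iff)
qed

lemma hw_vector_shear_invariant:
  fixes v :: "'k::field_char_0 bic"
  assumes "hw_vector d wt v" "2 \<le> d"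
  shows "psubst (shear 1 (pconst s)) (snd v) = snd v"
proof -
  let ?u = "\<lambda>i j. if i = j then 1 else if i = 1 \<and> j = 2 then s else (0::'k)"
  have "lin_endo (gl_lin d ?u) v = v"
    by (rule hw_vector_unipotent[OF assms(1)]) simp_all
  then have "snd (lin_endo (gl_lin d ?u) v) = snd v" by (rule arg_cong)
  then have "psubst (lin_subst (gl_lin d ?u)) (snd v) = snd v"
    by (simp only: lin_endo_def snd_conv)
  then show ?thesis
    by (simp only: lin_subst_gl_lin_shear[OF assms(2)])
qed

lemma lin_subst_mix1:
  "lin_subst (\<lambda>j. if j = 1 then single 1 s1 + single 2 s2 else single j 1) = mix1 (pconst s1) (pconst s2)"
proof
  fix v :: var show "lin_subst (\<lambda>j. if j = 1 then single 1 s1 + single 2 s2 else single j 1) v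
      = mix1 (pconst s1) (pconst s2) v"
    by (cases v) (auto simp: mix1_def linY_add linZ_add linY_single linZ_single)
qed

lemma T_ideal_mix1:
  fixes p :: "'k::field pol"
  assumes "is_T_ideal I" "det12 ^ b * p \<in> pol_part I" "s1 \<noteq> 0"
  shows "det12 ^ b * psubst (mix1 (pconst s1) (pconst s2)) p \<in> pol_part I"
proof -
  have "psubst (mix1 (pconst s1) (pconst s2)) det12 = pconst s1 * (det12 :: 'k pol)"
    by (simp add: mix1_def psubst_simps algebra_simps)
  then have "psubst (mix1 (pconst s1) (pconst s2)) (det12 ^ b * p)
      = pconst (s1 ^ b) * (det12 ^ b * psubst (mix1 (pconst s1) (pconst s2)) p)"
    by (simp add: psubst_mult psubst_power power_mult_distrib pconst_power mult.assoc)
  moreover have "psubst (mix1 (pconst s1) (pconst s2)) (det12 ^ b * p) \<in> pol_part I"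
    using T_ideal_psubst_lin_subst[OF assms(1,2), of "\<lambda>j. if j = 1 then single 1 s1 + single 2 s2 else single j 1"]
    by (simp only: lin_subst_mix1)
  ultimately have "pconst (1 / s1 ^ b) * (pconst (s1 ^ b) * (det12 ^ b * psubst (mix1 (pconst s1) (pconst s2)) p))
      \<in> pol_part I"
    by (simp add: pol_ideal_mult[OF pol_ideal_pol_part[OF assms(1)]])
  then show ?thesis
    using assms(3) by (simp add: mult.assoc[symmetric] pconst_mult[symmetric])
qed

lemma T_ideal_det12_of_lin:
  fixes v :: "'k::field bic"
  assumes I: "is_T_ideal I" and "v \<in> I" and "snd v = 0" and j: "lookup (fst v) j \<noteq> 0"
  shows "det12 \<in> pol_part I"
proof -
  define l where "l = fst v"
  define E :: "nat \<Rightarrow> (nat \<Rightarrow>\<^sub>0 'k)" where "E i = (if i = j then single 1 (1 / lookup l j) else 0)" for i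
  have "lin_ext E l = single 1 1"
  proof (rule poly_mapping_eqI)
    fix i
    have "lookup (lin_ext E l) i = (\<Sum>j'\<in>keys l. if j' = j then lookup l j * lookup (single 1 (1 / lookup l j)) i else 0)"
      unfolding lookup_lin_ext by (intro sum.cong refl) (auto simp: E_def)
    also have "\<dots> = lookup (single 1 1) i"
      using j by (simp add: l_def in_keys_iff lookup_single when_def)
    finally show "lookup (lin_ext E l) i = lookup (single 1 1) i" .
  qed
  then have "bic_x 1 \<in> I"
    using T_ideal_lin_endo[OF I \<open>v \<in> I\<close>, of E] \<open>snd v = 0\<close> by (simp add: lin_endo_def bic_x_def l_def)
  then have "bic_mul (bic_x 1) (bic_x 2) \<in> I" "bic_mul (bic_x 2) (bic_x 1) \<in> I"
    using I bic_x_carrier unfolding is_T_ideal_def by blast+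
  then have "yy 1 * zz 2 \<in> pol_part I" "yy 2 * zz 1 \<in> pol_part I"
    by (simp_all add: bic_mul_def bic_x_def linY_single linZ_single pol_part_def)
  then show ?thesis by (rule pol_ideal_diff[OF pol_ideal_pol_part[OF I]])
qed

lemma hw_vector_det12_power:
  fixes v :: "'k::field_char_0 bic"
  assumes I: "is_T_ideal I" and "v \<in> I" and Fd: "v \<in> Fd d"
    and hw: "hw_vector d (wt2 a b) v" and ab: "b \<le> a" "b = 0 \<or> 2 \<le> d"
  shows "det12 ^ a \<in> pol_part I"
proof (cases "fst v = 0")
  case True
  define P where "P = snd v"
  have "v = (0, P)" using True by (simp add: P_def prod_eq_iff)
  then have "P \<in> pol_part I" using \<open>v \<in> I\<close> by (simp add: pol_part_def)
  have "P \<noteq> 0" using True hw by (auto simp: P_def hw_vector_def bic_zero_def prod_eq_iff)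
  have hom: "homogeneous12 a b P" unfolding P_def using hw Fd ab(2) by (rule hw_vector_homogeneous12)
  have "det12 ^ b dvd P"
  proof (cases "b = 0")
    case False
    then have "2 \<le> d" using ab(2) by simp
    then show ?thesis
      using det12_power_dvd[OF hom] hw_vector_shear_invariant[OF hw] by (simp add: P_def)
  qed simp
  then obtain p where P: "P = det12 ^ b * p" by (rule dvdE)
  have "det12 ^ (b + (a - b)) \<in> pol_part I"
  proof (rule det12_power_in_ideal[OF pol_ideal_pol_part[OF I]])
    show "p \<noteq> 0" using \<open>P \<noteq> 0\<close> P by auto
    show "homogeneous12 (a - b) 0 p" using hom P ab(1) by (rule homogeneous12_det12_cofactor)
    show "det12 ^ b * psubst (mix1 (pconst s1) (pconst s2)) p \<in> pol_part I" if "s1 \<noteq> 0" for s1 s2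
      using T_ideal_mix1[OF I _ that] \<open>P \<in> pol_part I\<close> P by simp
  qed
  then show ?thesis using ab(1) by simp
next
  case False
  then have "a = 1" and "snd v = 0" using hw_vector_lin[OF hw Fd ab] by simp_all
  obtain j where "j \<in> keys (fst v)" using False by (metis keys_eq_empty ex_in_conv)
  then have "lookup (fst v) j \<noteq> 0" by (simp add: in_keys_iff)
  then show ?thesis using T_ideal_det12_of_lin[OF I \<open>v \<in> I\<close> \<open>snd v = 0\<close>] \<open>a = 1\<close> by simp
qed

lemma wmu_in_T_ideal:
  assumes "is_T_ideal I" "det12 ^ l \<in> pol_part I" "l \<le> m2"
  shows "wmu m1 m2 j \<in> I"
proof -
  have eq: "yy 1 ^ j * det12 ^ m2 * zz 1 ^ (m1 - m2 - j)
      = (yy 1 ^ j * det12 ^ (m2 - l) * zz 1 ^ (m1 - m2 - j)) * det12 ^ l"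
    using assms(3) by (simp add: mult_ac power_add[symmetric])
  have "(yy 1 ^ j * det12 ^ (m2 - l) * zz 1 ^ (m1 - m2 - j)) * det12 ^ l \<in> pol_part I"
    by (rule pol_ideal_mult[OF pol_ideal_pol_part[OF assms(1)] assms(2)])
  then show ?thesis unfolding wmu_def pol_part_def mem_Collect_eq eq .
qed

theorem lemma4p2:
  fixes f :: "'k::field_char_0 bic" and M :: "'k bic set" and d l1 l2 :: nat
  assumes "l2 \<le> l1"
    and "l2 = 0 \<or> 2 \<le> d"
    and "iso_W d M l1 l2"
    and "f \<in> M" and "f \<noteq> bic_zero"
  shows "(\<forall>m1 m2 j. m2 \<le> m1 \<and> l1 \<le> m2 \<and> j \<le> m1 - m2 \<longrightarrow> wmu m1 m2 j \<in> T_ideal_gen f)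
         \<and> (0, (yy 1 * zz 2 - yy 2 * zz 1) ^ l1) \<in> T_ideal_gen f"
proof -
  obtain v where "v \<in> M" and hw: "hw_vector d (wt2 l1 l2) v"
    using assms(3) by (auto simp: iso_W_def)
  have irr: "irreducible_GL d M" using assms(3) by (simp add: iso_W_def)
  then have "v \<in> Fd d" using \<open>v \<in> M\<close> by (auto simp: irreducible_GL_def is_GL_submodule_def)
  have det: "det12 ^ l1 \<in> pol_part I" if I: "is_T_ideal I" "f \<in> I" for I
  proof -
    have "v \<in> I" using irreducible_subset_T_ideal[OF irr assms(4,5) I] \<open>v \<in> M\<close> by blast
    then show ?thesis using hw_vector_det12_power[OF I(1) _ \<open>v \<in> Fd d\<close> hw assms(1,2)] by blast
  qed
  have "wmu m1 m2 j \<in> I" if "l1 \<le> m2" "is_T_ideal I" "f \<in> I" for m1 m2 j I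
    using wmu_in_T_ideal[OF that(2) det[OF that(2,3)] that(1)] .
  then show ?thesis
    using det by (auto simp: T_ideal_gen_def pol_part_def)
qed

end
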